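(* Let $G$ be a graph of order $n$ and maximum degree $\Delta$. Then $\phi_k^d(G)=n$ in each of the following cases: (i) $G$ is a tree with $\Delta\ge 2$ and $k\in\{2,\dots,\Delta\}$; (ii) $G$ is a planar graph with $\Delta\ge 6$ and $k\in\{6,\dots,\Delta\}$; (iii) $G$ is a planar triangle-free graph with $\Delta\ge 4$ and $k\in\{4,\dots,\Delta\}$.
   Context: All graphs are finite and simple. For a graph $G=(V,E)$, a set $S\subseteq V$ and $v\in V$, let $\delta_S(v)=|\{u\in S: uv\in E\}|$ and $\overline{S}=V\setminus S$. For an integer $k$, a non-empty set $S\subseteq V$ is a defensive $k$-alliance if $\delta_S(v)\ge \delta_{\overline S}(v)+k$ for every $v\in S$. A set $X\subseteq V$ is a defensive $k$-alliance free set ($k$-daf set) if no defensive $k$-alliance $S$ satisfies $S\subseteq X$. $\phi_k^d(G)$ denotes the maximum cardinality of a $k$-daf set in $G$. *)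

theory Defs
  imports "HOL-Analysis.Analysis"
begin

definition graph :: "'a set \<Rightarrow> 'a set set \<Rightarrow> bool" where
  "graph V E \<longleftrightarrow> finite V \<and> (\<forall>e\<in>E. \<exists>u v. e = {u, v} \<and> u \<noteq> v \<and> u \<in> V \<and> v \<in> V)"

definition adj :: "'a set set \<Rightarrow> 'a \<Rightarrow> 'a \<Rightarrow> bool" where
  "adj E u v \<longleftrightarrow> {u, v} \<in> E"

definition delta :: "'a set set \<Rightarrow> 'a set \<Rightarrow> 'a \<Rightarrow> nat" where
  "delta E S v = card {u \<in> S. adj E u v}"

definition degree :: "'a set \<Rightarrow> 'a set set \<Rightarrow> 'a \<Rightarrow> nat" where
  "degree V E v = delta E V v"

definition max_degree :: "'a set \<Rightarrow> 'a set set \<Rightarrow> nat" where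
  "max_degree V E = Max (insert 0 (degree V E ` V))"

definition defensive_alliance :: "'a set \<Rightarrow> 'a set set \<Rightarrow> int \<Rightarrow> 'a set \<Rightarrow> bool" where
  "defensive_alliance V E k S \<longleftrightarrow> S \<noteq> {} \<and> S \<subseteq> V \<and>
     (\<forall>v\<in>S. int (delta E S v) \<ge> int (delta E (V - S) v) + k)"

definition daf_set :: "'a set \<Rightarrow> 'a set set \<Rightarrow> int \<Rightarrow> 'a set \<Rightarrow> bool" where
  "daf_set V E k X \<longleftrightarrow> X \<subseteq> V \<and> \<not> (\<exists>S. S \<subseteq> X \<and> defensive_alliance V E k S)"

definition phi_d :: "'a set \<Rightarrow> 'a set set \<Rightarrow> int \<Rightarrow> nat" where
  "phi_d V E k = Max {card X | X. daf_set V E k X}"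

definition walk :: "'a set \<Rightarrow> 'a set set \<Rightarrow> 'a list \<Rightarrow> bool" where
  "walk V E xs \<longleftrightarrow> xs \<noteq> [] \<and> set xs \<subseteq> V \<and> (\<forall>i. Suc i < length xs \<longrightarrow> adj E (xs ! i) (xs ! Suc i))"

definition connected_graph :: "'a set \<Rightarrow> 'a set set \<Rightarrow> bool" where
  "connected_graph V E \<longleftrightarrow> (\<forall>u\<in>V. \<forall>v\<in>V. \<exists>xs. walk V E xs \<and> hd xs = u \<and> last xs = v)"

definition has_cycle :: "'a set \<Rightarrow> 'a set set \<Rightarrow> bool" where
  "has_cycle V E \<longleftrightarrow> (\<exists>xs. walk V E xs \<and> distinct xs \<and> length xs \<ge> 3 \<and> adj E (last xs) (hd xs))"

definition is_tree :: "'a set \<Rightarrow> 'a set set \<Rightarrow> bool" where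
  "is_tree V E \<longleftrightarrow> V \<noteq> {} \<and> connected_graph V E \<and> \<not> has_cycle V E"

definition triangle_free :: "'a set \<Rightarrow> 'a set set \<Rightarrow> bool" where
  "triangle_free V E \<longleftrightarrow> \<not> (\<exists>u\<in>V. \<exists>v\<in>V. \<exists>w\<in>V. adj E u v \<and> adj E v w \<and> adj E u w)"

text \<open>Planarity: a drawing in the plane (complex numbers = R^2): vertices are distinct points,
  each edge is an arc between the images of its endpoints meeting no other vertex point,
  and two distinct edges meet only in common endpoints.\<close>
definition planar :: "'a set \<Rightarrow> 'a set set \<Rightarrow> bool" where
  "planar V E \<longleftrightarrow> (\<exists>(p :: 'a \<Rightarrow> complex) (\<gamma> :: 'a set \<Rightarrow> real \<Rightarrow> complex).
     inj_on p V \<and>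
     (\<forall>e\<in>E. arc (\<gamma> e) \<and> {pathstart (\<gamma> e), pathfinish (\<gamma> e)} = p ` e \<and>
              path_image (\<gamma> e) \<inter> p ` V = p ` e) \<and>
     (\<forall>e\<in>E. \<forall>e'\<in>E. e \<noteq> e' \<longrightarrow> path_image (\<gamma> e) \<inter> path_image (\<gamma> e') \<subseteq> p ` (e \<inter> e')))"

end

theory Submission
  imports Defs "HOL-Library.Transitive_Closure_Table"
begin

text \<open>
  A defensive k-alliance S needs delta_S(v) \<ge> k for every v \<in> S.  So if every nonempty
  vertex set contains a vertex with fewer than k neighbours inside it, no defensive k-alliance
  exists, V itself is k-daf and phi_d V E k = |V|.  The three cases of the theorem follow from:

  (i)   a graph without cycles has such a vertex (degree < 2) in every nonempty set,
        since minimum degree 2 forces a cycle;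
  (ii)  a plane graph of girth at least g \<ge> 3 satisfies the Euler-type bound
        (g - 2) |E| + g \<le> g |V|, hence by the handshake lemma a vertex of degree
        < 6 (g = 3) or, for triangle-free graphs, < 4 (g = 4).

  The edge bound is proved without Euler's formula, by a simultaneous induction on |V| + |E|
  for general drawings and for "disk drawings", i.e. drawings lying in the closed region
  bounded by a cycle cs, where the stronger bound (g - 2) |E| + g + |cs| \<le> g |V| holds.
  A disk is cut along an ear (a path between two boundary vertices through the inside) into two
  smaller disks, using the Jordan curve theorem for theta graphs; a general drawing is cut along
  a cycle into the inner disk and the outer part, which becomes a disk after an inversion.
\<close>


section \<open>Graphs\<close>

lemma graph_edge:
  assumes "graph V E" "e \<in> E" shows "\<exists>u v. e = {u,v} \<and> u \<noteq> v \<and> u \<in> V \<and> v \<in> V"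
  using assms(1)[unfolded graph_def, THEN conjunct2] assms(2) by (rule bspec)

lemma graph_edge_sub: "graph V E \<Longrightarrow> e \<in> E \<Longrightarrow> e \<subseteq> V"
  using graph_edge by fastforce

lemma graph_finite_vertices: "graph V E \<Longrightarrow> finite V"
  unfolding graph_def by (rule conjunct1)

lemma graph_finite_edges: "graph V E \<Longrightarrow> finite E"
proof -
  assume G: "graph V E"
  have "E \<subseteq> Pow V" using graph_edge_sub[OF G] by blast
  then show ?thesis using graph_finite_vertices[OF G] finite_subset by blast
qed

lemma graph_sub:
  assumes "graph V E" "V' \<subseteq> V" "E' \<subseteq> E" "\<forall>e\<in>E'. e \<subseteq> V'"
  shows "graph V' E'"
proof -
  have "finite V'" using graph_finite_vertices[OF assms(1)] assms(2) finite_subset by blast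
  moreover have "\<exists>u v. e = {u, v} \<and> u \<noteq> v \<and> u \<in> V' \<and> v \<in> V'" if e: "e \<in> E'" for e
  proof -
    obtain u v where "e = {u,v}" "u \<noteq> v" using graph_edge[OF assms(1)] assms(3) e by blast
    moreover have "e \<subseteq> V'" using assms(4) e by blast
    ultimately show ?thesis by blast
  qed
  ultimately show ?thesis unfolding graph_def by blast
qed

lemma edge_other:
  assumes G: "graph V E" and e: "e \<in> E" and x: "x \<in> e"
  shows "\<exists>y. e = {x, y} \<and> y \<noteq> x \<and> y \<in> V"
  using graph_edge[OF G e] x by (auto simp: doubleton_eq_iff)

lemma two_elements: "finite S \<Longrightarrow> 2 \<le> card S \<Longrightarrow> \<exists>a b. a \<in> S \<and> b \<in> S \<and> a \<noteq> b"
  using card_le_Suc0_iff_eq[of S] by auto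

section \<open>Paths and cycles as vertex lists\<close>

fun path_edges :: "'a list \<Rightarrow> 'a set set" where
  "path_edges (a # b # xs) = insert {a, b} (path_edges (b # xs))"
| "path_edges _ = {}"

definition cycle_edges :: "'a list \<Rightarrow> 'a set set" where
  "cycle_edges cs = insert {last cs, hd cs} (path_edges cs)"

definition is_cycle :: "'a set set \<Rightarrow> 'a list \<Rightarrow> bool" where
  "is_cycle E cs \<longleftrightarrow> distinct cs \<and> 3 \<le> length cs \<and> cycle_edges cs \<subseteq> E"

lemma path_edges_Union_sub: "\<Union> (path_edges xs) \<subseteq> set xs"
  by (induction xs rule: path_edges.induct) auto

lemma path_edges_Union: "2 \<le> length xs \<Longrightarrow> \<Union> (path_edges xs) = set xs"
proof (induction xs rule: path_edges.induct)
  case (1 a b xs)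
  then show ?case by (cases xs) auto
qed auto

lemma path_edges_append: "xs \<noteq> [] \<Longrightarrow> path_edges (xs @ ys) = path_edges xs \<union> path_edges (last xs # ys)"
proof (induction xs rule: path_edges.induct)
  case (1 a b xs)
  then show ?case by auto
next
  case ("2_1")
  then show ?case by simp
next
  case ("2_2" v)
  then show ?case by (cases ys) auto
qed

lemma path_edges_snoc: "xs \<noteq> [] \<Longrightarrow> path_edges (xs @ [y]) = insert {last xs, y} (path_edges xs)"
  by (simp add: path_edges_append)

lemma path_edges_rev: "path_edges (rev xs) = path_edges xs"
proof (induction xs rule: path_edges.induct)
  case (1 a b xs)
  have "path_edges (rev (a # b # xs)) = path_edges ((rev xs @ [b]) @ [a])" by simp
  also have "\<dots> = insert {b, a} (path_edges (rev xs @ [b]))" by (subst path_edges_snoc) auto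
  also have "\<dots> = insert {a, b} (path_edges (rev (b # xs)))" by (simp add: insert_commute)
  finally show ?case using 1 by simp
qed auto

lemma path_edges_finite: "finite (path_edges xs)"
  by (induction xs rule: path_edges.induct) auto

lemma path_edges_card: "distinct xs \<Longrightarrow> card (path_edges xs) = length xs - 1"
proof (induction xs rule: path_edges.induct)
  case (1 a b xs)
  have "{a,b} \<notin> path_edges (b # xs)" using path_edges_Union_sub[of "b # xs"] 1(2) by auto
  moreover have "finite (path_edges (b # xs))" by (rule path_edges_finite)
  ultimately show ?case using 1 by simp
qed auto

lemma path_edges_nth: "Suc i < length xs \<Longrightarrow> {xs ! i, xs ! Suc i} \<in> path_edges xs"
proof (induction xs arbitrary: i rule: path_edges.induct)
  case (1 a b xs)
  then show ?case by (cases i) auto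
qed auto

lemma path_edges_take_drop:
  "j < length xs \<Longrightarrow> path_edges xs = path_edges (take (Suc j) xs) \<union> path_edges (drop j xs)"
proof -
  assume j: "j < length xs"
  have ne: "take (Suc j) xs \<noteq> []" using j by (cases xs) auto
  have "path_edges xs = path_edges (take (Suc j) xs @ drop (Suc j) xs)" by simp
  also have "\<dots> = path_edges (take (Suc j) xs) \<union> path_edges (last (take (Suc j) xs) # drop (Suc j) xs)"
    by (rule path_edges_append[OF ne])
  also have "last (take (Suc j) xs) = xs ! j"
  proof -
    have "length (take (Suc j) xs) = Suc j" using j by simp
    then show ?thesis using ne by (simp add: last_conv_nth)
  qed
  also have "xs ! j # drop (Suc j) xs = drop j xs"
    using j by (rule Cons_nth_drop_Suc)
  finally show ?thesis .
qed

lemma path_edges_mono_prefix: "path_edges xs \<subseteq> path_edges (xs @ ys)"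
  by (cases "xs = []") (auto simp: path_edges_append)

lemma path_edges_ne: "2 \<le> length xs \<Longrightarrow> path_edges xs \<noteq> {}"
  by (cases xs rule: path_edges.cases) auto

lemma path_edges_nonempty: "e \<in> path_edges xs \<Longrightarrow> e \<noteq> {}"
  by (induction xs rule: path_edges.induct) auto

lemma path_edges_rtrancl_path:
  assumes "rtrancl_path R a zs b"
  shows "path_edges (a # zs) \<subseteq> {{s, t} | s t. R s t} \<and> set zs \<subseteq> {t. \<exists>s. R s t} \<and> last (a # zs) = b"
  using assms
proof (induction rule: rtrancl_path.induct)
  case (step x y ys z)
  then show ?case by (cases ys) auto
qed simp

text \<open>Rotating the vertex list of a cycle gives the same cycle, so any cycle vertex may be
  taken as the head.\<close>
lemma cycle_edges_rotate1: "3 \<le> length cs \<Longrightarrow> cycle_edges (rotate1 cs) = cycle_edges cs"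
proof -
  assume "3 \<le> length cs"
  obtain a xs where cs: "cs = a # xs" using \<open>3 \<le> length cs\<close> by (cases cs) auto
  have xs: "xs \<noteq> []" using \<open>3 \<le> length cs\<close> cs by auto
  have "cycle_edges (rotate1 cs) = insert {a, hd xs} (insert {last xs, a} (path_edges xs))"
    using xs by (simp add: cs cycle_edges_def path_edges_snoc insert_commute)
  moreover have "path_edges cs = insert {a, hd xs} (path_edges xs)" using xs by (cases xs) (auto simp: cs)
  ultimately show ?thesis using xs by (simp add: cycle_edges_def cs insert_commute)
qed

lemma is_cycle_rotate1: "is_cycle E cs \<Longrightarrow> is_cycle E (rotate1 cs)"
  by (simp add: is_cycle_def cycle_edges_rotate1)

lemma is_cycle_rotate: "is_cycle E cs \<Longrightarrow> is_cycle E (rotate n cs) \<and> cycle_edges (rotate n cs) = cycle_edges cs"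
proof (induction n)
  case 0 then show ?case by simp
next
  case (Suc n)
  have r: "rotate (Suc n) cs = rotate1 (rotate n cs)" by (rule rotate_Suc)
  have c: "is_cycle E (rotate n cs)" and ce: "cycle_edges (rotate n cs) = cycle_edges cs" using Suc by blast+
  have l: "3 \<le> length (rotate n cs)" using c by (simp only: is_cycle_def)
  have "is_cycle E (rotate1 (rotate n cs))" by (rule is_cycle_rotate1[OF c])
  moreover have "cycle_edges (rotate1 (rotate n cs)) = cycle_edges cs" using cycle_edges_rotate1[OF l] ce by (rule trans)
  ultimately show ?case unfolding r by blast
qed

lemma is_cycle_rotate_hd:
  assumes "is_cycle E cs" "u \<in> set cs"
  shows "\<exists>cs'. is_cycle E cs' \<and> cycle_edges cs' = cycle_edges cs \<and> set cs' = set cs \<and> length cs' = length cs \<and> hd cs' = u"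
proof -
  obtain i where i: "i < length cs" "cs ! i = u" using assms(2) by (auto simp: in_set_conv_nth)
  let ?cs = "rotate i cs"
  have "hd ?cs = cs ! (i mod length cs)" using i by (intro hd_rotate_conv_nth) auto
  then have "hd ?cs = u" using i by simp
  then show ?thesis using is_cycle_rotate[OF assms(1), of i] by (rule_tac x="?cs" in exI) simp
qed

lemma closing_edge_notin:
  assumes "distinct cs" "3 \<le> length cs"
  shows "{last cs, hd cs} \<notin> path_edges cs"
proof -
  obtain a b rest where cs: "cs = a # b # rest"
    using assms(2) by (cases cs; cases "tl cs") auto
  have rest: "rest \<noteq> []" using assms(2) cs by auto
  show ?thesis
  proof
    assume "{last cs, hd cs} \<in> path_edges cs"
    then have h: "{last rest, a} \<in> insert {a,b} (path_edges (b # rest))" using rest by (simp add: cs)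
    have "last rest \<in> set rest" using rest by simp
    then have "last rest \<noteq> b" "last rest \<noteq> a" using assms(1) by (auto simp: cs)
    moreover have "a \<notin> \<Union>(path_edges (b # rest))" using path_edges_Union_sub[of "b # rest"] assms(1) cs by auto
    ultimately show False using h by (auto simp: doubleton_eq_iff)
  qed
qed

lemma cycle_edges_card:
  assumes "distinct cs" "3 \<le> length cs"
  shows "card (cycle_edges cs) = length cs"
  using closing_edge_notin[OF assms] path_edges_card[OF assms(1)] assms(2) by (simp add: cycle_edges_def path_edges_finite)

lemma cycle_edges_Union: "3 \<le> length cs \<Longrightarrow> \<Union> (cycle_edges cs) = set cs"
  using path_edges_Union[of cs] by (cases cs) (auto simp: cycle_edges_def)

lemma is_cycle_set_sub: "graph V E \<Longrightarrow> is_cycle E cs \<Longrightarrow> set cs \<subseteq> V"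
proof -
  assume G: "graph V E" and c: "is_cycle E cs"
  have "set cs = \<Union>(cycle_edges cs)" using c cycle_edges_Union unfolding is_cycle_def by metis
  also have "\<dots> \<subseteq> V" using c graph_edge_sub[OF G] unfolding is_cycle_def by blast
  finally show ?thesis .
qed

definition girth_at_least :: "nat \<Rightarrow> 'a set set \<Rightarrow> bool" where
  "girth_at_least g E \<longleftrightarrow> (\<forall>cs. is_cycle E cs \<longrightarrow> g \<le> length cs)"

lemma girth_at_least_mono: "girth_at_least g E \<Longrightarrow> E' \<subseteq> E \<Longrightarrow> girth_at_least g E'"
  unfolding girth_at_least_def is_cycle_def by blast

definition simple_paths :: "'a set \<Rightarrow> 'a set set \<Rightarrow> 'a list set" where
  "simple_paths V E = {xs. distinct xs \<and> xs \<noteq> [] \<and> set xs \<subseteq> V \<and> path_edges xs \<subseteq> E}"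

lemma longest_path:
  assumes G: "graph V E" and ne: "V \<noteq> {}"
  obtains xs where "xs \<in> simple_paths V E" "\<And>zs. zs \<in> simple_paths V E \<Longrightarrow> length zs \<le> length xs"
proof -
  define P where "P = simple_paths V E"
  have fin: "finite V" by (rule graph_finite_vertices[OF G])
  have Lsub: "length ` P \<subseteq> {..card V}"
  proof
    fix n assume "n \<in> length ` P"
    then obtain xs where "xs \<in> P" "n = length xs" by blast
    then have "distinct xs" "set xs \<subseteq> V" unfolding P_def simple_paths_def by auto
    then have "length xs \<le> card V" using card_mono[OF fin] distinct_card by metis
    then show "n \<in> {..card V}" using \<open>n = length xs\<close> by simp
  qed
  have finL: "finite (length ` P)" using Lsub finite_subset by blast
  obtain v where v: "v \<in> V" using ne by blast
  have "[v] \<in> P" using v unfolding P_def simple_paths_def by simp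
  then have neL: "length ` P \<noteq> {}" by blast
  obtain xs where xs: "xs \<in> P" "length xs = Max (length ` P)"
    using Max_in[OF finL neL] by auto
  have "length zs \<le> length xs" if "zs \<in> P" for zs
    using xs(2) Max_ge[OF finL] that by simp
  then show ?thesis using that xs(1) unfolding P_def by blast
qed

text \<open>A nonempty graph in which every vertex has two distinct neighbours contains a cycle:
  the last neighbour of the first vertex of a longest path closes a cycle.\<close>
lemma min_degree_two_cycle:
  assumes G: "graph V E" and ne: "V \<noteq> {}"
    and deg2: "\<And>x. x \<in> V \<Longrightarrow> \<exists>y z. y \<noteq> z \<and> {x,y} \<in> E \<and> {x,z} \<in> E"
  shows "\<exists>cs. is_cycle E cs"
proof -
  define P where "P = simple_paths V E"
  obtain xs where xs: "xs \<in> P" and maxl: "\<And>zs. zs \<in> P \<Longrightarrow> length zs \<le> length xs"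
    using longest_path[OF G ne] unfolding P_def by blast
  obtain x ys where xys: "xs = x # ys" using xs(1) unfolding P_def simple_paths_def by (cases xs) auto
  have dx: "distinct xs" and sV: "set xs \<subseteq> V" and peE: "path_edges xs \<subseteq> E" using xs(1) unfolding P_def simple_paths_def by auto
  have xV: "x \<in> V" using sV xys by simp
  have nb: "w \<in> set ys" if w: "{x,w} \<in> E" for w
  proof (rule ccontr)
    assume nin: "w \<notin> set ys"
    obtain a b where ab: "{x,w} = {a,b}" "a \<noteq> b" "a \<in> V" "b \<in> V" using graph_edge[OF G w] by blast
    then have wx: "w \<noteq> x" and wV: "w \<in> V" by (auto simp: doubleton_eq_iff)
    have "w # xs \<in> P" using nin wx wV dx sV peE w unfolding P_def simple_paths_def xys by (auto simp: insert_commute)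
    then show False using maxl by fastforce
  qed
  obtain y z where yz: "y \<noteq> z" "{x,y} \<in> E" "{x,z} \<in> E" using deg2[OF xV] by blast
  have "y \<in> set ys" "z \<in> set ys" using nb yz by auto
  then obtain t where t: "t \<in> set ys" "t \<noteq> hd ys" "{x,t} \<in> E" using yz by metis
  obtain as bs where asbs: "ys = as @ t # bs" using split_list[OF t(1)] by blast
  have asne: "as \<noteq> []" using t(2) asbs by auto
  define cs where "cs = x # as @ [t]"
  have "distinct cs" using dx unfolding cs_def xys asbs by auto
  moreover have "3 \<le> length cs" using asne unfolding cs_def by (cases as) auto
  moreover have "cycle_edges cs \<subseteq> E"
  proof -
    have "path_edges cs \<subseteq> path_edges (cs @ bs)" by (rule path_edges_mono_prefix)
    also have "cs @ bs = xs" unfolding cs_def xys asbs by simp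
    finally have "path_edges cs \<subseteq> E" using peE by blast
    moreover have "{last cs, hd cs} \<in> E" using t(3) unfolding cs_def by (simp add: insert_commute)
    ultimately show ?thesis unfolding cycle_edges_def by blast
  qed
  ultimately show ?thesis unfolding is_cycle_def by blast
qed

lemma cycle_split_arcs:
  assumes dcs: "distinct cs" and m3: "3 \<le> length cs" and j0: "0 < j" and j: "j < length cs"
  defines "L1 \<equiv> take (Suc j) cs" and "L2 \<equiv> hd cs # rev (drop j cs)"
  shows "distinct L1" "length L1 = Suc j" "hd L1 = hd cs" "last L1 = cs ! j"
    and "distinct L2" "length L2 = length cs - j + 1" "hd L2 = hd cs" "last L2 = cs ! j"
proof -
  define u where "u = hd cs"
  define v where "v = cs ! j"
  have csne: "cs \<noteq> []" using m3 by auto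
  have cs0: "cs ! 0 = u" using csne by (simp add: u_def hd_conv_nth)
  have dj_ne: "drop j cs \<noteq> []" using j by simp
  show L1d: "distinct L1" unfolding L1_def using dcs by simp
  show L1l: "length L1 = Suc j" unfolding L1_def using j by simp
  have L1ne: "L1 \<noteq> []" using L1l by auto
  show L1h: "hd L1 = hd cs" unfolding L1_def using csne by (cases cs) auto
  show L1last: "last L1 = cs ! j"
  proof -
    have "last L1 = L1 ! j" using L1ne L1l by (simp add: last_conv_nth)
    then show ?thesis using j by (simp add: L1_def)
  qed
  have u_nd: "u \<notin> set (drop j cs)"
  proof
    assume "u \<in> set (drop j cs)"
    then obtain i where i: "i < length (drop j cs)" "drop j cs ! i = u" by (auto simp: in_set_conv_nth)
    then have "cs ! (j + i) = cs ! 0" using cs0 by simp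
    then have "j + i = 0" using nth_eq_iff_index_eq[OF dcs, of "j + i" 0] i csne by simp
    then show False using j0 by simp
  qed
  show L2d: "distinct L2" unfolding L2_def using dcs u_nd u_def by simp
  show L2l: "length L2 = length cs - j + 1" unfolding L2_def by simp
  show "hd L2 = hd cs" unfolding L2_def by simp
  have hdj: "hd (drop j cs) = v" using j dj_ne by (simp add: hd_drop_conv_nth v_def)
  show "last L2 = cs ! j" unfolding L2_def using dj_ne hdj by (simp add: last_rev v_def)
qed

lemma cycle_split_vertices:
  assumes dcs: "distinct cs" and m3: "3 \<le> length cs" and j0: "0 < j" and j: "j < length cs"
  defines "L1 \<equiv> take (Suc j) cs" and "L2 \<equiv> hd cs # rev (drop j cs)"
  shows "set L1 \<union> set L2 = set cs" "set L1 \<inter> set L2 = {hd cs, cs ! j}"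
proof -
  note arcs = cycle_split_arcs[OF dcs m3 j0 j, folded L1_def L2_def]
  define u where "u = hd cs"
  define v where "v = cs ! j"
  have u: "u \<in> set cs" using m3 by (cases cs) (auto simp: u_def)
  have L1ne: "L1 \<noteq> []" using arcs(2) by auto
  note L1h = arcs(3) and L1last = arcs(4)
  show "set L1 \<union> set L2 = set cs"
  proof -
    have "set cs = set (take (Suc j) cs) \<union> set (drop (Suc j) cs)"
      by (metis append_take_drop_id set_append)
    moreover have "set (drop (Suc j) cs) \<subseteq> set (drop j cs)" by (rule set_drop_subset_set_drop) simp
    moreover have "set (drop j cs) \<subseteq> set cs" by (rule set_drop_subset)
    ultimately show ?thesis unfolding L1_def L2_def using u u_def by auto
  qed
  show "set L1 \<inter> set L2 = {hd cs, cs ! j}"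
  proof -
    have "set (take (Suc j) cs) \<inter> set (drop (Suc j) cs) = {}"
      using dcs by (metis append_take_drop_id distinct_append)
    moreover have "set (drop j cs) = insert v (set (drop (Suc j) cs))"
      using j by (metis Cons_nth_drop_Suc list.simps(15) v_def)
    moreover have "v \<in> set L1" "u \<in> set L1"
      using L1last L1h last_in_set[OF L1ne] hd_in_set[OF L1ne] by (auto simp: u_def v_def)
    ultimately show ?thesis unfolding L1_def L2_def u_def v_def by auto
  qed
qed

lemma cycle_split_edges:
  assumes dcs: "distinct cs" and m3: "3 \<le> length cs" and j0: "0 < j" and j: "j < length cs"
  defines "L1 \<equiv> take (Suc j) cs" and "L2 \<equiv> hd cs # rev (drop j cs)"
  shows "path_edges L2 = insert {hd cs, last cs} (path_edges (drop j cs))"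
    and "path_edges L1 \<union> path_edges L2 = cycle_edges cs" "path_edges L1 \<inter> path_edges L2 = {}"
proof -
  note arcs = cycle_split_arcs[OF dcs m3 j0 j, folded L1_def L2_def]
  have dj_ne: "drop j cs \<noteq> []" using j by simp
  note L1d = arcs(1) and L1l = arcs(2) and L2d = arcs(5) and L2l = arcs(6)
  show peL2: "path_edges L2 = insert {hd cs, last cs} (path_edges (drop j cs))"
  proof -
    obtain w rest where wr: "rev (drop j cs) = w # rest" using dj_ne by (cases "rev (drop j cs)") auto
    have "w = last (drop j cs)" using wr dj_ne by (metis hd_rev list.sel(1))
    then have "w = last cs" using j by simp
    moreover have "path_edges L2 = insert {hd cs, w} (path_edges (rev (drop j cs)))"
      unfolding L2_def wr by simp
    ultimately show ?thesis by (simp add: path_edges_rev)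
  qed
  show peL1L2: "path_edges L1 \<union> path_edges L2 = cycle_edges cs"
  proof -
    have "path_edges cs = path_edges L1 \<union> path_edges (drop j cs)"
      unfolding L1_def using path_edges_take_drop j by blast
    then show ?thesis unfolding cycle_edges_def using peL2 by (auto simp: insert_commute)
  qed
  show "path_edges L1 \<inter> path_edges L2 = {}"
  proof -
    have "card (path_edges L1) + card (path_edges L2)
          = card (path_edges L1 \<union> path_edges L2) + card (path_edges L1 \<inter> path_edges L2)"
      by (rule card_Un_Int) (auto simp: path_edges_finite)
    moreover have "card (path_edges L1 \<union> path_edges L2) = length cs"
      using peL1L2 cycle_edges_card[OF dcs m3] by simp
    moreover have "card (path_edges L1) = j" "card (path_edges L2) = length cs - j"
      using path_edges_card[OF L1d] path_edges_card[OF L2d] L1l L2l by simp_all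
    ultimately have "card (path_edges L1 \<inter> path_edges L2) = 0" using j by simp
    then show ?thesis by (simp add: path_edges_finite)
  qed
qed

text \<open>A closed walk made of an arc L of a cycle and an ear P without edges on the cycle has at
  least three vertices: with only two, both L and P would be the single edge {u, v}.\<close>
lemma ear_cycle_long:
  assumes L: "2 \<le> length L" "hd L = u" "last L = v" "path_edges L \<subseteq> cycle_edges cs"
    and Pdis: "path_edges (u # ks @ [v]) \<inter> cycle_edges cs = {}"
    and C: "length C = length L + length ks"
  shows "3 \<le> length C"
proof (rule ccontr)
  assume "\<not> 3 \<le> length C"
  then have "length ks = 0" and L2: "length L = 2" using C L(1) by linarith+
  have "L = [u, v]" using L2 L(2,3) by (cases L; cases "tl L") auto
  moreover have "ks = []" using \<open>length ks = 0\<close> by simp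
  ultimately show False using L(4) Pdis by simp
qed

lemma ear_cycles:
  assumes dcs: "distinct cs" and m3: "3 \<le> length cs" and j0: "0 < j" and j: "j < length cs"
    and ks: "distinct ks" "set ks \<inter> set cs = {}"
    and Pdis: "path_edges (hd cs # ks @ [cs ! j]) \<inter> cycle_edges cs = {}"
  defines "L1 \<equiv> take (Suc j) cs" and "L2 \<equiv> hd cs # rev (drop j cs)"
    and "P \<equiv> hd cs # ks @ [cs ! j]"
    and "C1 \<equiv> take (Suc j) cs @ rev ks" and "C2 \<equiv> drop j cs @ hd cs # ks"
  shows "distinct C1" "3 \<le> length C1" "length C1 = Suc j + length ks"
    "set C1 = set L1 \<union> set ks" "cycle_edges C1 = path_edges L1 \<union> path_edges P"
    and "distinct C2" "3 \<le> length C2" "length C2 = length cs - j + 1 + length ks"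
    "set C2 = set L2 \<union> set ks" "cycle_edges C2 = path_edges L2 \<union> path_edges P"
proof -
  note split = cycle_split_arcs[OF dcs m3 j0 j, folded L1_def L2_def]
    cycle_split_vertices[OF dcs m3 j0 j, folded L1_def L2_def]
    cycle_split_edges[OF dcs m3 j0 j, folded L1_def L2_def]
  have C1: "C1 = L1 @ rev ks" unfolding C1_def L1_def ..
  define u where "u = hd cs"
  define v where "v = cs ! j"
  have csne: "cs \<noteq> []" using m3 by auto
  have u: "u \<in> set cs" using csne by (simp add: u_def)
  have C2: "C2 = drop j cs @ u # ks" unfolding C2_def u_def ..
  have dj_ne: "drop j cs \<noteq> []" using j by simp
  have L1ne: "L1 \<noteq> []" using split(2) by auto
  have P: "P = u # ks @ [v]" unfolding P_def u_def v_def ..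
  have revP: "rev P = (v # rev ks) @ [u]" unfolding P by simp
  have peP1: "path_edges P = insert {last (v # rev ks), u} (path_edges (v # rev ks))"
    using path_edges_rev[of P] revP path_edges_snoc[of "v # rev ks" u] by simp
  have peP2: "path_edges P = insert {last (u # ks), v} (path_edges (u # ks))"
    using path_edges_snoc[of "u # ks" v] unfolding P by simp
  have lastC1: "last C1 = last (v # rev ks)"
    unfolding C1 using split(4) L1ne by (cases "ks = []") (auto simp: v_def)
  have hdC1: "hd C1 = u" unfolding C1 using split(3) L1ne by (simp add: u_def)
  have peC1: "path_edges C1 = path_edges L1 \<union> path_edges (v # rev ks)"
    unfolding C1 using path_edges_append[OF L1ne, of "rev ks"] split(4) by (simp add: v_def)
  show ceC1: "cycle_edges C1 = path_edges L1 \<union> path_edges P"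
    unfolding cycle_edges_def using lastC1 hdC1 peC1 peP1 by auto
  have hdC2: "hd C2 = v" unfolding C2 using dj_ne j by (simp add: hd_drop_conv_nth v_def)
  have lastC2: "last C2 = last (u # ks)" unfolding C2 by simp
  have peC2: "path_edges C2 = path_edges (drop j cs) \<union> insert {last cs, u} (path_edges (u # ks))"
    unfolding C2 using path_edges_append[OF dj_ne, of "u # ks"] j by (cases ks) auto
  show ceC2: "cycle_edges C2 = path_edges L2 \<union> path_edges P"
    unfolding cycle_edges_def using lastC2 hdC2 peC2 peP2 split(11)
    by (auto simp: insert_commute u_def)
  show "set C1 = set L1 \<union> set ks" unfolding C1 by simp
  show "set C2 = set L2 \<union> set ks" unfolding C2_def L2_def by auto
  show lenC1: "length C1 = Suc j + length ks" unfolding C1 using split(2) by simp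
  show lenC2: "length C2 = length cs - j + 1 + length ks" unfolding C2_def by simp
  show "distinct C1"
    unfolding C1 using split(1) ks set_take_subset[of "Suc j" cs] by (auto simp: L1_def)
  have u_nd: "u \<notin> set (drop j cs)" using split(5) by (simp add: L2_def u_def)
  show "distinct C2"
  proof -
    have "set (drop j cs) \<inter> set ks = {}" using ks(2) set_drop_subset[of j cs] by blast
    moreover have "u \<notin> set ks" using ks(2) u by blast
    ultimately show ?thesis unfolding C2_def using u_nd ks(1) dcs by (auto simp: u_def)
  qed
  show "3 \<le> length C1"
    by (rule ear_cycle_long[of L1 u v cs ks]) (use split(1-4,12) Pdis lenC1 j0 in \<open>auto simp: u_def v_def\<close>)
  show "3 \<le> length C2"
    by (rule ear_cycle_long[of L2 u v cs ks]) (use split(5-8,12) Pdis lenC2 j in \<open>auto simp: u_def v_def\<close>)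
qed

section \<open>Plane drawings\<close>

definition drawn :: "'a set \<Rightarrow> 'a set set \<Rightarrow> ('a \<Rightarrow> complex) \<Rightarrow> ('a set \<Rightarrow> real \<Rightarrow> complex) \<Rightarrow> bool" where
  "drawn V E p \<gamma> \<longleftrightarrow> inj_on p V \<and>
     (\<forall>e\<in>E. arc (\<gamma> e) \<and> {pathstart (\<gamma> e), pathfinish (\<gamma> e)} = p ` e \<and>
              path_image (\<gamma> e) \<inter> p ` V = p ` e) \<and>
     (\<forall>e\<in>E. \<forall>e'\<in>E. e \<noteq> e' \<longrightarrow> path_image (\<gamma> e) \<inter> path_image (\<gamma> e') \<subseteq> p ` (e \<inter> e'))"

lemma planar_drawn: "planar V E \<longleftrightarrow> (\<exists>p \<gamma>. drawn V E p \<gamma>)"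
  unfolding planar_def drawn_def by (rule refl)

definition edges_image :: "('a set \<Rightarrow> real \<Rightarrow> complex) \<Rightarrow> 'a set set \<Rightarrow> complex set" where
  "edges_image \<gamma> F = (\<Union>e\<in>F. path_image (\<gamma> e))"

definition edge_interior :: "('a set \<Rightarrow> real \<Rightarrow> complex) \<Rightarrow> ('a \<Rightarrow> complex) \<Rightarrow> 'a set \<Rightarrow> complex set" where
  "edge_interior \<gamma> p e = path_image (\<gamma> e) - p ` e"

lemma drawn_inj: "drawn V E p \<gamma> \<Longrightarrow> inj_on p V"
  unfolding drawn_def by (rule conjunct1)

lemma drawn_edges: "drawn V E p \<gamma> \<Longrightarrow> \<forall>e\<in>E. arc (\<gamma> e) \<and> {pathstart (\<gamma> e), pathfinish (\<gamma> e)} = p ` e \<and>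
              path_image (\<gamma> e) \<inter> p ` V = p ` e"
  unfolding drawn_def by (rule conjunct1[OF conjunct2])

lemma drawn_cross: "drawn V E p \<gamma> \<Longrightarrow> \<forall>e\<in>E. \<forall>e'\<in>E. e \<noteq> e' \<longrightarrow> path_image (\<gamma> e) \<inter> path_image (\<gamma> e') \<subseteq> p ` (e \<inter> e')"
  unfolding drawn_def by (rule conjunct2[OF conjunct2])

lemma drawnI:
  assumes "inj_on p V"
    "\<And>e. e \<in> E \<Longrightarrow> arc (\<gamma> e) \<and> {pathstart (\<gamma> e), pathfinish (\<gamma> e)} = p ` e \<and> path_image (\<gamma> e) \<inter> p ` V = p ` e"
    "\<And>e e'. e \<in> E \<Longrightarrow> e' \<in> E \<Longrightarrow> e \<noteq> e' \<Longrightarrow> path_image (\<gamma> e) \<inter> path_image (\<gamma> e') \<subseteq> p ` (e \<inter> e')"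
  shows "drawn V E p \<gamma>"
  unfolding drawn_def using assms by (intro conjI ballI impI) auto

lemma drawn_sub:
  assumes "drawn V E p \<gamma>" "V' \<subseteq> V" "E' \<subseteq> E" "\<forall>e\<in>E'. e \<subseteq> V'"
  shows "drawn V' E' p \<gamma>"
proof (rule drawnI)
  show "inj_on p V'" using drawn_inj[OF assms(1)] assms(2) by (rule inj_on_subset)
next
  fix e assume eE': "e \<in> E'"
  have e: "e \<in> E" using eE' assms(3) by blast
  have h: "arc (\<gamma> e) \<and> {pathstart (\<gamma> e), pathfinish (\<gamma> e)} = p ` e \<and> path_image (\<gamma> e) \<inter> p ` V = p ` e"
    using drawn_edges[OF assms(1)] e by (rule bspec)
  have "p ` e \<subseteq> path_image (\<gamma> e)"
  proof -
    have "{pathstart (\<gamma> e), pathfinish (\<gamma> e)} \<subseteq> path_image (\<gamma> e)"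
      by (simp add: pathstart_in_path_image pathfinish_in_path_image)
    then show ?thesis using h by simp
  qed
  moreover have "p ` e \<subseteq> p ` V'" using assms(4) eE' by blast
  moreover have "path_image (\<gamma> e) \<inter> p ` V' \<subseteq> p ` e" using h assms(2) by blast
  ultimately show "arc (\<gamma> e) \<and> {pathstart (\<gamma> e), pathfinish (\<gamma> e)} = p ` e \<and> path_image (\<gamma> e) \<inter> p ` V' = p ` e"
    using h by blast
next
  fix e e' assume "e \<in> E'" "e' \<in> E'" "e \<noteq> e'"
  then show "path_image (\<gamma> e) \<inter> path_image (\<gamma> e') \<subseteq> p ` (e \<inter> e')"
    using drawn_cross[OF assms(1)] assms(3) by blast
qed

context
  fixes V E p \<gamma>
  assumes G: "graph V E" and D: "drawn V E p \<gamma>"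
begin

lemma drawn_edge: "e \<in> E \<Longrightarrow> arc (\<gamma> e) \<and> {pathstart (\<gamma> e), pathfinish (\<gamma> e)} = p ` e \<and> path_image (\<gamma> e) \<inter> p ` V = p ` e"
  using drawn_edges[OF D] by (rule bspec)

lemma edge_arc: "e \<in> E \<Longrightarrow> arc (\<gamma> e)" using drawn_edge by blast

lemma edge_ends: "e \<in> E \<Longrightarrow> {pathstart (\<gamma> e), pathfinish (\<gamma> e)} = p ` e" using drawn_edge by blast

lemma edge_vertices: "e \<in> E \<Longrightarrow> path_image (\<gamma> e) \<inter> p ` V = p ` e" using drawn_edge by blast

lemma edges_cross: "e \<in> E \<Longrightarrow> e' \<in> E \<Longrightarrow> e \<noteq> e' \<Longrightarrow> path_image (\<gamma> e) \<inter> path_image (\<gamma> e') \<subseteq> p ` (e \<inter> e')"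
  using drawn_cross[OF D] by blast

lemma ends_in_image: "e \<in> E \<Longrightarrow> p ` e \<subseteq> path_image (\<gamma> e)"
proof -
  assume e: "e \<in> E"
  have "{pathstart (\<gamma> e), pathfinish (\<gamma> e)} \<subseteq> path_image (\<gamma> e)"
    by (simp add: pathstart_in_path_image pathfinish_in_path_image)
  then show ?thesis using edge_ends[OF e] by simp
qed

lemma edges_image_vert: "F \<subseteq> E \<Longrightarrow> edges_image \<gamma> F \<inter> p ` V = p ` \<Union>F"
proof -
  assume F: "F \<subseteq> E"
  have "edges_image \<gamma> F \<inter> p ` V \<subseteq> p ` \<Union>F"
    using edge_vertices F unfolding edges_image_def by blast
  moreover have "p ` \<Union>F \<subseteq> edges_image \<gamma> F" using ends_in_image F unfolding edges_image_def by blast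
  moreover have "p ` \<Union>F \<subseteq> p ` V" using graph_edge_sub[OF G] F by blast
  ultimately show ?thesis by blast
qed

lemma edges_image_cross:
  assumes "F1 \<subseteq> E" "F2 \<subseteq> E" "F1 \<inter> F2 = {}"
  shows "edges_image \<gamma> F1 \<inter> edges_image \<gamma> F2 \<subseteq> p ` (\<Union>F1 \<inter> \<Union>F2)"
proof
  fix z assume "z \<in> edges_image \<gamma> F1 \<inter> edges_image \<gamma> F2"
  then obtain e1 e2 where e: "e1 \<in> F1" "e2 \<in> F2" "z \<in> path_image (\<gamma> e1)" "z \<in> path_image (\<gamma> e2)"
    unfolding edges_image_def by blast
  then have "e1 \<noteq> e2" using assms(3) by blast
  then have "z \<in> p ` (e1 \<inter> e2)" using edges_cross e assms(1,2) by blast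
  then show "z \<in> p ` (\<Union>F1 \<inter> \<Union>F2)" using e by blast
qed

lemma edge_interior_eq: "e \<in> E \<Longrightarrow> edge_interior \<gamma> p e = \<gamma> e ` {0<..<1}"
proof -
  assume e: "e \<in> E"
  have a: "arc (\<gamma> e)" using edge_arc e .
  then have inj: "inj_on (\<gamma> e) {0..1}" unfolding arc_def by blast
  have ends: "p ` e = {\<gamma> e 0, \<gamma> e 1}" using edge_ends[OF e] by (simp add: pathstart_def pathfinish_def)
  have "path_image (\<gamma> e) = \<gamma> e ` {0..1}" by (simp add: path_image_def)
  moreover have "{0..1::real} = {0<..<1} \<union> {0,1}" by auto
  ultimately have "path_image (\<gamma> e) = \<gamma> e ` {0<..<1} \<union> {\<gamma> e 0, \<gamma> e 1}" by auto
  moreover have "\<gamma> e 0 \<notin> \<gamma> e ` {0<..<1}"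
  proof
    assume "\<gamma> e 0 \<in> \<gamma> e ` {0<..<1}"
    then obtain t where t: "t \<in> {0<..<1}" "\<gamma> e 0 = \<gamma> e t" by blast
    have "(0::real) = t" by (rule inj_onD[OF inj t(2)]) (use t(1) in auto)
    with t show False by simp
  qed
  moreover have "\<gamma> e 1 \<notin> \<gamma> e ` {0<..<1}"
  proof
    assume "\<gamma> e 1 \<in> \<gamma> e ` {0<..<1}"
    then obtain t where t: "t \<in> {0<..<1}" "\<gamma> e 1 = \<gamma> e t" by blast
    have "(1::real) = t" by (rule inj_onD[OF inj t(2)]) (use t(1) in auto)
    with t show False by simp
  qed
  ultimately show ?thesis unfolding edge_interior_def ends by blast
qed

lemma edge_interior_connected: "e \<in> E \<Longrightarrow> connected (edge_interior \<gamma> p e)"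
proof -
  assume e: "e \<in> E"
  have "continuous_on {0..1} (\<gamma> e)" using edge_arc[OF e] unfolding arc_def path_def by blast
  then have "continuous_on {0<..<1} (\<gamma> e)" by (rule continuous_on_subset) auto
  then show ?thesis unfolding edge_interior_eq[OF e] by (rule connected_continuous_image) simp
qed

lemma edge_interior_ne: "e \<in> E \<Longrightarrow> edge_interior \<gamma> p e \<noteq> {}"
proof -
  assume e: "e \<in> E"
  have "\<gamma> e (1/2) \<in> \<gamma> e ` {0<..<1}" by auto
  then show ?thesis using edge_interior_eq[OF e] by auto
qed

lemma edge_interior_cross: "e \<in> E \<Longrightarrow> e' \<in> E \<Longrightarrow> e \<noteq> e' \<Longrightarrow> edge_interior \<gamma> p e \<inter> path_image (\<gamma> e') = {}"
proof -
  assume a: "e \<in> E" "e' \<in> E" "e \<noteq> e'"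
  have "edge_interior \<gamma> p e \<inter> path_image (\<gamma> e') \<subseteq> p ` (e \<inter> e')"
    using edges_cross[OF a] unfolding edge_interior_def by blast
  then show ?thesis unfolding edge_interior_def by blast
qed

lemma edge_interior_avoids_image: "e \<in> E \<Longrightarrow> F \<subseteq> E \<Longrightarrow> e \<notin> F \<Longrightarrow> edge_interior \<gamma> p e \<inter> edges_image \<gamma> F = {}"
  unfolding edges_image_def using edge_interior_cross by blast

lemma closure_edge_interior: "e \<in> E \<Longrightarrow> path_image (\<gamma> e) \<subseteq> closure (edge_interior \<gamma> p e)"
proof -
  assume e: "e \<in> E"
  have c: "continuous_on {0..1} (\<gamma> e)" using edge_arc[OF e] unfolding arc_def path_def by blast
  have cl: "closure {0<..<1::real} = {0..1}" by simp
  have "\<gamma> e ` closure {0<..<1} \<subseteq> closure (\<gamma> e ` {0<..<1})"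
  proof (rule image_closure_subset)
    show "continuous_on (closure {0<..<1}) (\<gamma> e)" using c cl by simp
    show "closed (closure (\<gamma> e ` {0<..<1}))" by simp
    show "\<gamma> e ` {0<..<1} \<subseteq> closure (\<gamma> e ` {0<..<1})" by (rule closure_subset)
  qed
  then show ?thesis unfolding edge_interior_eq[OF e] path_image_def cl .
qed

lemma edge_side:
  assumes e: "e \<in> E" and U: "open U" and W: "open W" and UW: "U \<inter> W = {}"
    and sub: "edge_interior \<gamma> p e \<subseteq> U \<union> W"
  shows "edge_interior \<gamma> p e \<subseteq> U \<or> edge_interior \<gamma> p e \<subseteq> W"
  using connectedD[OF edge_interior_connected[OF e] U W] UW sub by blast

definition oriented_arc :: "'a set \<Rightarrow> 'a \<Rightarrow> real \<Rightarrow> complex" where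
  "oriented_arc e a = (if pathstart (\<gamma> e) = p a then \<gamma> e else reversepath (\<gamma> e))"

lemma oriented_arc:
  assumes "{a,b} \<in> E"
  shows "arc (oriented_arc {a,b} a) \<and> pathstart (oriented_arc {a,b} a) = p a \<and> pathfinish (oriented_arc {a,b} a) = p b
         \<and> path_image (oriented_arc {a,b} a) = path_image (\<gamma> {a,b})"
proof -
  obtain u v where uv: "{a,b} = {u,v}" "u \<noteq> v" "u \<in> V" "v \<in> V" using graph_edge[OF G assms] by blast
  then have ab: "a \<noteq> b" "a \<in> V" "b \<in> V" by (auto simp: doubleton_eq_iff)
  then have pab: "p a \<noteq> p b" using inj_onD[OF drawn_inj[OF D]] by blast
  have ar: "arc (\<gamma> {a,b})" using edge_arc[OF assms] .
  have se: "{pathstart (\<gamma> {a,b}), pathfinish (\<gamma> {a,b})} = {p a, p b}" using edge_ends[OF assms] by simp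
  have ne: "pathstart (\<gamma> {a,b}) \<noteq> pathfinish (\<gamma> {a,b})" using arc_distinct_ends[OF ar] by simp
  show ?thesis
  proof (cases "pathstart (\<gamma> {a,b}) = p a")
    case True
    then have "pathfinish (\<gamma> {a,b}) = p b" using se ne by (auto simp: doubleton_eq_iff)
    then show ?thesis using True ar by (simp add: oriented_arc_def)
  next
    case False
    then have "pathstart (\<gamma> {a,b}) = p b" "pathfinish (\<gamma> {a,b}) = p a" using se by (auto simp: doubleton_eq_iff)
    then show ?thesis using False ar by (simp add: oriented_arc_def arc_reversepath)
  qed
qed

fun path_arc :: "'a list \<Rightarrow> real \<Rightarrow> complex" where
  "path_arc (a # b # c # xs) = oriented_arc {a,b} a +++ path_arc (b # c # xs)"
| "path_arc [a, b] = oriented_arc {a,b} a"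
| "path_arc _ = linepath 0 0"

lemma path_arc:
  assumes "distinct xs" "2 \<le> length xs" "path_edges xs \<subseteq> E"
  shows "arc (path_arc xs) \<and> pathstart (path_arc xs) = p (hd xs) \<and> pathfinish (path_arc xs) = p (last xs)
         \<and> path_image (path_arc xs) = edges_image \<gamma> (path_edges xs)"
  using assms
proof (induction xs rule: path_arc.induct)
  case (1 a b c xs)
  let ?o = "oriented_arc {a,b} a" and ?r = "path_arc (b # c # xs)"
  have ab: "{a,b} \<in> E" using 1(4) by simp
  have IH: "arc ?r \<and> pathstart ?r = p b \<and> pathfinish ?r = p (last (c # xs)) \<and> path_image ?r = edges_image \<gamma> (path_edges (b # c # xs))"
    using 1 by simp
  have o: "arc ?o \<and> pathstart ?o = p a \<and> pathfinish ?o = p b \<and> path_image ?o = path_image (\<gamma> {a,b})"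
    using oriented_arc[OF ab] .
  have nin: "{a,b} \<notin> path_edges (b # c # xs)" using path_edges_Union_sub[of "b # c # xs"] 1(2) by auto
  have "edges_image \<gamma> {{a,b}} \<inter> edges_image \<gamma> (path_edges (b # c # xs)) \<subseteq> p ` (\<Union>{{a,b}} \<inter> \<Union>(path_edges (b # c # xs)))"
    by (rule edges_image_cross) (use 1(4) nin in auto)
  also have "\<dots> \<subseteq> p ` {b}" using path_edges_Union_sub[of "b # c # xs"] 1(2) by auto
  finally have int: "path_image ?o \<inter> path_image ?r \<subseteq> {pathstart ?r}"
    using o IH by (simp add: edges_image_def)
  have "arc (?o +++ ?r)" by (rule arc_join) (use o IH int in auto)
  moreover have "path_image (?o +++ ?r) = edges_image \<gamma> (path_edges (a # b # c # xs))"
    using o IH by (simp add: path_image_join edges_image_def)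
  ultimately show ?case using o IH by simp
next
  case (2 a b)
  then show ?case using oriented_arc[of a b] by (simp add: edges_image_def)
qed auto

definition cycle_curve :: "'a list \<Rightarrow> real \<Rightarrow> complex" where
  "cycle_curve cs = path_arc cs +++ oriented_arc {last cs, hd cs} (last cs)"

lemma cycle_curve:
  assumes "is_cycle E cs"
  shows "simple_path (cycle_curve cs) \<and> pathfinish (cycle_curve cs) = pathstart (cycle_curve cs) \<and> path_image (cycle_curve cs) = edges_image \<gamma> (cycle_edges cs)"
proof -
  have d: "distinct cs" and l: "3 \<le> length cs" and ce: "cycle_edges cs \<subseteq> E" using assms by (auto simp: is_cycle_def)
  have path_edges: "path_edges cs \<subseteq> E" and cl: "{last cs, hd cs} \<in> E" using ce by (auto simp: cycle_edges_def)
  have P: "arc (path_arc cs) \<and> pathstart (path_arc cs) = p (hd cs) \<and> pathfinish (path_arc cs) = p (last cs) \<and> path_image (path_arc cs) = edges_image \<gamma> (path_edges cs)"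
    using path_arc[OF d _ path_edges] l by simp
  have O: "arc (oriented_arc {last cs, hd cs} (last cs)) \<and> pathstart (oriented_arc {last cs, hd cs} (last cs)) = p (last cs)
     \<and> pathfinish (oriented_arc {last cs, hd cs} (last cs)) = p (hd cs) \<and> path_image (oriented_arc {last cs, hd cs} (last cs)) = path_image (\<gamma> {last cs, hd cs})"
    using oriented_arc[OF cl] .
  have nin: "{last cs, hd cs} \<notin> path_edges cs" using closing_edge_notin[OF d l] .
  have "edges_image \<gamma> (path_edges cs) \<inter> edges_image \<gamma> {{last cs, hd cs}} \<subseteq> p ` (\<Union>(path_edges cs) \<inter> \<Union>{{last cs, hd cs}})"
    by (rule edges_image_cross) (use path_edges cl nin in auto)
  also have "\<dots> \<subseteq> {p (hd cs), p (last cs)}" by auto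
  finally have int: "path_image (path_arc cs) \<inter> path_image (oriented_arc {last cs, hd cs} (last cs)) \<subseteq>
       {pathstart (path_arc cs), pathstart (oriented_arc {last cs, hd cs} (last cs))}"
    using P O by (simp add: edges_image_def)
  have "simple_path (cycle_curve cs)" unfolding cycle_curve_def
    by (rule simple_path_join_loop) (use P O int in auto)
  moreover have "pathfinish (cycle_curve cs) = pathstart (cycle_curve cs)" using P O by (simp add: cycle_curve_def)
  moreover have "path_image (cycle_curve cs) = edges_image \<gamma> (cycle_edges cs)"
    using P O by (simp add: cycle_curve_def path_image_join edges_image_def cycle_edges_def Un_commute)
  ultimately show ?thesis by blast
qed

lemma cycle_jordan:
  assumes "is_cycle E cs"
  defines "J \<equiv> edges_image \<gamma> (cycle_edges cs)"
  shows "inside J \<noteq> {} \<and> open (inside J) \<and> open (outside J) \<and> closed J \<and> bounded J \<and>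
         inside J \<inter> outside J = {} \<and> inside J \<union> outside J = - J"
proof -
  have c: "simple_path (cycle_curve cs)" "pathfinish (cycle_curve cs) = pathstart (cycle_curve cs)" "path_image (cycle_curve cs) = J"
    using cycle_curve[OF assms(1)] J_def by auto
  have pth: "path (cycle_curve cs)" by (rule simple_path_imp_path[OF c(1)])
  have "closed J" using closed_path_image[OF pth] c(3) by simp
  moreover have "bounded J" using bounded_path_image[OF pth] c(3) by simp
  ultimately show ?thesis using Jordan_inside_outside[OF c(1,2)] c(3) by simp
qed

end

lemma edges_image_Un: "edges_image \<gamma> (A \<union> B) = edges_image \<gamma> A \<union> edges_image \<gamma> B"
  unfolding edges_image_def by blast

lemma path_arcs_meet:
  assumes G: "graph V E" and D: "drawn V E p \<gamma>"
    and L: "distinct L" "2 \<le> length L" "path_edges L \<subseteq> E" "hd L = u" "last L = v"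
    and L': "distinct L'" "2 \<le> length L'" "path_edges L' \<subseteq> E" "hd L' = u" "last L' = v"
    and dis: "path_edges L \<inter> path_edges L' = {}" and meet: "set L \<inter> set L' = {u, v}"
  shows "path_image (path_arc p \<gamma> L) \<inter> path_image (path_arc p \<gamma> L') = {p u, p v}"
proof
  have A: "path_image (path_arc p \<gamma> L) = edges_image \<gamma> (path_edges L)"
    "pathstart (path_arc p \<gamma> L) = p u" "pathfinish (path_arc p \<gamma> L) = p v"
    using path_arc[OF G D L(1-3)] L(4,5) by auto
  have A': "path_image (path_arc p \<gamma> L') = edges_image \<gamma> (path_edges L')"
    "pathstart (path_arc p \<gamma> L') = p u" "pathfinish (path_arc p \<gamma> L') = p v"
    using path_arc[OF G D L'(1-3)] L'(4,5) by auto
  have "edges_image \<gamma> (path_edges L) \<inter> edges_image \<gamma> (path_edges L')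
        \<subseteq> p ` (\<Union>(path_edges L) \<inter> \<Union>(path_edges L'))"
    by (rule edges_image_cross[OF G D L(3) L'(3) dis])
  then show "path_image (path_arc p \<gamma> L) \<inter> path_image (path_arc p \<gamma> L') \<subseteq> {p u, p v}"
    using A A' path_edges_Union[OF L(2)] path_edges_Union[OF L'(2)] meet by simp
  show "{p u, p v} \<subseteq> path_image (path_arc p \<gamma> L) \<inter> path_image (path_arc p \<gamma> L')"
  proof -
    have "{p u, p v} \<subseteq> path_image g" if "pathstart g = p u" "pathfinish g = p v" for g :: "real \<Rightarrow> complex"
      using that pathstart_in_path_image[of g] pathfinish_in_path_image[of g] by simp
    then show ?thesis using A(2,3) A'(2,3) by blast
  qed
qed

lemma theta_split:
  assumes G: "graph V E" and D: "drawn V E p \<gamma>" and uV: "u \<in> V" "v \<in> V" and uv: "u \<noteq> v"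
    and L1: "distinct L1" "2 \<le> length L1" "path_edges L1 \<subseteq> E" "hd L1 = u" "last L1 = v"
    and L2: "distinct L2" "2 \<le> length L2" "path_edges L2 \<subseteq> E" "hd L2 = u" "last L2 = v"
    and P: "distinct P" "2 \<le> length P" "path_edges P \<subseteq> E" "hd P = u" "last P = v"
    and dis: "path_edges L1 \<inter> path_edges L2 = {}" "path_edges L1 \<inter> path_edges P = {}"
      "path_edges L2 \<inter> path_edges P = {}"
    and meet: "set L1 \<inter> set L2 = {u, v}" "set L1 \<inter> set P = {u, v}" "set L2 \<inter> set P = {u, v}"
    and ne: "edges_image \<gamma> (path_edges P) \<inter> inside (edges_image \<gamma> (path_edges L1 \<union> path_edges L2)) \<noteq> {}"
  defines "J \<equiv> edges_image \<gamma> (path_edges L1 \<union> path_edges L2)"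
    and "J1 \<equiv> edges_image \<gamma> (path_edges L1 \<union> path_edges P)"
    and "J2 \<equiv> edges_image \<gamma> (path_edges L2 \<union> path_edges P)"
  shows "inside J1 \<inter> inside J2 = {}"
    and "inside J1 \<union> inside J2 \<union> (edges_image \<gamma> (path_edges P) - {p u, p v}) = inside J"
proof -
  define c1 c2 c where "c1 = path_arc p \<gamma> L1" and "c2 = path_arc p \<gamma> L2" and "c = path_arc p \<gamma> P"
  have C1: "arc c1" "pathstart c1 = p u" "pathfinish c1 = p v" "path_image c1 = edges_image \<gamma> (path_edges L1)"
    using path_arc[OF G D L1(1-3)] L1(4,5) unfolding c1_def by auto
  have C2: "arc c2" "pathstart c2 = p u" "pathfinish c2 = p v" "path_image c2 = edges_image \<gamma> (path_edges L2)"
    using path_arc[OF G D L2(1-3)] L2(4,5) unfolding c2_def by auto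
  have CP: "arc c" "pathstart c = p u" "pathfinish c = p v" "path_image c = edges_image \<gamma> (path_edges P)"
    using path_arc[OF G D P(1-3)] P(4,5) unfolding c_def by auto
  have puv: "p u \<noteq> p v" using inj_onD[OF drawn_inj[OF D] _ uV] uv by blast
  have i12: "path_image c1 \<inter> path_image c2 = {p u, p v}"
    unfolding c1_def c2_def by (rule path_arcs_meet[OF G D L1 L2 dis(1) meet(1)])
  have i1c: "path_image c1 \<inter> path_image c = {p u, p v}"
    unfolding c1_def c_def by (rule path_arcs_meet[OF G D L1 P dis(2) meet(2)])
  have i2c: "path_image c2 \<inter> path_image c = {p u, p v}"
    unfolding c2_def c_def by (rule path_arcs_meet[OF G D L2 P dis(3) meet(3)])
  have ne12: "path_image c \<inter> inside (path_image c1 \<union> path_image c2) \<noteq> {}"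
    using ne C1 C2 CP by (simp add: edges_image_Un)
  obtain
       "inside (path_image c1 \<union> path_image c) \<inter> inside (path_image c2 \<union> path_image c) = {}"
       "inside (path_image c1 \<union> path_image c) \<union> inside (path_image c2 \<union> path_image c) \<union>
          (path_image c - {p u, p v}) = inside (path_image c1 \<union> path_image c2)"
    by (rule split_inside_simple_closed_curve[of c1 "p u" "p v" c2 c])
       (use C1(1-3) C2(1-3) CP(1-3) puv i12 i1c i2c ne12 arc_imp_simple_path in auto)
  then show "inside J1 \<inter> inside J2 = {}"
    and "inside J1 \<union> inside J2 \<union> (edges_image \<gamma> (path_edges P) - {p u, p v}) = inside J"
    unfolding J_def J1_def J2_def edges_image_Un using C1 C2 CP by simp_all
qed

lemma edge_in_one_region:
  assumes G: "graph V E" and D: "drawn V E p \<gamma>" and e: "e \<in> E"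
    and U: "open U" and W: "open W" and UW: "U \<inter> W = {}"
    and sub: "edge_interior \<gamma> p e \<subseteq> U \<union> W"
  shows "path_image (\<gamma> e) \<subseteq> closure U \<or> path_image (\<gamma> e) \<subseteq> closure W"
  using edge_side[OF G D e U W UW sub] closure_edge_interior[OF G D e] closure_mono by blast

lemma vertex_on_edges_image:
  assumes G: "graph V E" and D: "drawn V E p \<gamma>" and F: "F \<subseteq> E"
    and w: "w \<in> V" "p w \<in> edges_image \<gamma> F"
  shows "w \<in> \<Union>F"
proof -
  have "p w \<in> p ` \<Union>F" using edges_image_vert[OF G D F] w by blast
  moreover have "\<Union>F \<subseteq> V" using graph_edge_sub[OF G] F by blast
  ultimately show ?thesis using inj_onD[OF drawn_inj[OF D]] w(1) by blast
qed

lemma vertex_on_cycle: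
  assumes G: "graph V E" and D: "drawn V E p \<gamma>" and cy: "is_cycle E cs"
    and w: "w \<in> V" "p w \<in> edges_image \<gamma> (cycle_edges cs)"
  shows "w \<in> set cs"
  using vertex_on_edges_image[OF G D _ w] cy cycle_edges_Union[of cs] unfolding is_cycle_def by blast

lemma region_edge_ends:
  assumes G: "graph V E" and D: "drawn V E p \<gamma>" and cy: "is_cycle E cs" and e: "e \<in> E"
    and sub: "path_image (\<gamma> e) \<subseteq> edges_image \<gamma> (cycle_edges cs) \<union> R"
  shows "e \<subseteq> set cs \<union> {w \<in> V. p w \<in> R}"
proof
  fix x assume x: "x \<in> e"
  have xV: "x \<in> V" using graph_edge_sub[OF G e] x by blast
  have "p x \<in> edges_image \<gamma> (cycle_edges cs) \<union> R" using ends_in_image[OF G D e] x sub by blast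
  then show "x \<in> set cs \<union> {w \<in> V. p w \<in> R}" using vertex_on_cycle[OF G D cy xV] xV by blast
qed

lemma edge_outside_subregion:
  assumes G: "graph V E" and D: "drawn V E p \<gamma>" and e: "e \<in> E" and eJ: "path_image (\<gamma> e) \<subseteq> J"
    and F: "F \<subseteq> E" "e \<notin> F" and IJ: "inside (edges_image \<gamma> F) \<subseteq> inside J"
  shows "\<not> path_image (\<gamma> e) \<subseteq> edges_image \<gamma> F \<union> inside (edges_image \<gamma> F)"
proof
  assume sub: "path_image (\<gamma> e) \<subseteq> edges_image \<gamma> F \<union> inside (edges_image \<gamma> F)"
  obtain z where z: "z \<in> edge_interior \<gamma> p e" using edge_interior_ne[OF G D e] by blast
  have "z \<in> J" using z eJ unfolding edge_interior_def by blast
  then have "z \<notin> inside (edges_image \<gamma> F)" using IJ inside_no_overlap[of J] by blast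
  then have "z \<in> edges_image \<gamma> F" using sub z unfolding edge_interior_def by blast
  then show False using edge_interior_avoids_image[OF G D e F] z by blast
qed

section \<open>Inversion in a point\<close>

text \<open>Inversion z \<mapsto> 1/(z - z0) at a point z0 not on the drawing: a homeomorphism of the
  punctured plane that turns the outside of a curve around z0 into an inside.\<close>
definition inversion :: "complex \<Rightarrow> complex \<Rightarrow> complex" where
  "inversion z0 z = inverse (z - z0)"

lemma inversion_inj: "inj_on (inversion z0) (- {z0})"
  unfolding inj_on_def inversion_def by auto

lemma inversion_continuous: "continuous_on (- {z0}) (inversion z0)"
  unfolding inversion_def by (intro continuous_intros) auto

lemma inversion_image:
  assumes "U \<subseteq> - {z0}"
  shows "inversion z0 ` U = - {0} \<inter> (\<lambda>w. z0 + inverse w) -` U"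
proof
  show "inversion z0 ` U \<subseteq> - {0} \<inter> (\<lambda>w. z0 + inverse w) -` U"
    using assms by (auto simp: inversion_def)
  show "- {0} \<inter> (\<lambda>w. z0 + inverse w) -` U \<subseteq> inversion z0 ` U"
  proof
    fix w assume w: "w \<in> - {0} \<inter> (\<lambda>w. z0 + inverse w) -` U"
    then have "inversion z0 (z0 + inverse w) = w" by (simp add: inversion_def)
    then show "w \<in> inversion z0 ` U" using w by (metis IntD2 image_eqI vimageE)
  qed
qed

lemma inversion_open:
  assumes "open U" "U \<subseteq> - {z0}"
  shows "open (inversion z0 ` U)"
proof -
  have "continuous_on (- {0}) (\<lambda>w. z0 + inverse w)" by (intro continuous_intros) auto
  then have "open (- {0} \<inter> (\<lambda>w. z0 + inverse w) -` U)"
    using assms(1) by (intro continuous_open_preimage) auto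
  then show ?thesis using inversion_image[OF assms(2)] by simp
qed

lemma inversion_preimage:
  assumes "w \<noteq> 0"
  shows "inversion z0 (z0 + inverse w) = w" "z0 + inverse w \<noteq> z0"
  using assms by (simp_all add: inversion_def)

text \<open>The exterior of a curve around z0 is mapped into a bounded set, since it stays away from z0.\<close>
lemma inversion_outside_bounded:
  fixes J :: "complex set"
  assumes cJ: "closed J" and z0: "z0 \<in> inside J"
  shows "bounded (inversion z0 ` outside J \<union> {0})"
proof -
  obtain r where r: "r > 0" "ball z0 r \<subseteq> inside J" using open_inside[OF cJ] z0 open_contains_ball by blast
  have "norm (inversion z0 z) \<le> 1 / r" if "z \<in> outside J" for z
  proof -
    have "z \<notin> ball z0 r" using that r(2) inside_Int_outside by blast
    then have "norm (z - z0) \<ge> r" by (simp add: dist_norm norm_minus_commute)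
    then have "inverse (norm (z - z0)) \<le> inverse r" using r(1) by (rule le_imp_inverse_le)
    then show ?thesis by (simp add: inversion_def norm_inverse inverse_eq_divide norm_divide)
  qed
  then have "inversion z0 ` outside J \<union> {0} \<subseteq> cball 0 (1/r)" using r(1) by auto
  then show ?thesis using bounded_cball bounded_subset by blast
qed

text \<open>The image of the exterior of a bounded curve, together with 0 (the image of infinity),
  is open: points near 0 come from far away, hence from the exterior.\<close>
lemma inversion_outside_open:
  fixes J :: "complex set"
  assumes cJ: "closed J" and bJ: "bounded J" and z0: "z0 \<notin> outside J"
  shows "open (inversion z0 ` outside J \<union> {0})"
proof -
  obtain R where R: "- outside J \<subseteq> ball 0 R"
    using cobounded_outside[OF bJ] bounded_subset_ballD by blast
  have nz0: "norm z0 < R" using R z0 by auto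
  define d where "d = 1 / (R + norm z0 + 1)"
  have "0 < R + norm z0 + 1" using nz0 norm_ge_zero[of z0] by linarith
  then have d0: "d > 0" by (simp add: d_def)
  have "ball 0 d \<subseteq> inversion z0 ` outside J \<union> {0}"
  proof
    fix w :: complex assume w: "w \<in> ball 0 d"
    show "w \<in> inversion z0 ` outside J \<union> {0}"
    proof (cases "w = 0")
      case False
      define z where "z = z0 + inverse w"
      have "inverse (norm w) > inverse d" using w False by (simp add: less_imp_inverse_less)
      then have "norm (inverse w) > R + norm z0 + 1" using nz0 by (simp add: d_def norm_inverse)
      moreover have "norm z \<ge> norm (inverse w) - norm z0"
        unfolding z_def by (metis add.commute norm_diff_ineq)
      ultimately have "z \<notin> ball 0 R" by simp
      then have "z \<in> outside J" using R by blast
      then show ?thesis using inversion_preimage[OF False] unfolding z_def by (metis UnI1 image_eqI)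
    qed simp
  qed
  then have "inversion z0 ` outside J \<union> {0} = inversion z0 ` outside J \<union> ball 0 d" using d0 by auto
  moreover have "open (inversion z0 ` outside J)"
    by (rule inversion_open[OF open_outside[OF cJ]]) (use z0 in blast)
  ultimately show ?thesis by auto
qed

text \<open>Inversion at a point z0 inside a closed bounded curve J maps the exterior of J into the
  interior of the image curve: the exterior plus the image of infinity is a bounded open set,
  separated from the image of the interior.\<close>
lemma inversion_outside_inside:
  fixes J :: "complex set"
  assumes cJ: "closed J" and bJ: "bounded J" and z0: "z0 \<in> inside J"
  shows "inversion z0 ` outside J \<subseteq> inside (inversion z0 ` J)"
proof -
  let ?f = "inversion z0"
  define A where "A = ?f ` outside J \<union> {0}"
  define B where "B = ?f ` (inside J - {z0})"
  have sub: "J \<subseteq> - {z0}" "outside J \<subseteq> - {z0}" "inside J - {z0} \<subseteq> - {z0}"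
    using z0 inside_no_overlap[of J] inside_Int_outside[of J] by blast+
  note injf = inversion_inj[of z0]
  have bA: "bounded A" and oA: "open A" unfolding A_def
    using inversion_outside_bounded[OF cJ z0] inversion_outside_open[OF cJ bJ] sub(2) by blast+
  have oB: "open B" unfolding B_def by (rule inversion_open) (use open_inside[OF cJ] in auto)
  have AB: "A \<inter> B = {}"
  proof -
    have "0 \<notin> B" unfolding B_def by (auto simp: inversion_def)
    moreover have "?f ` outside J \<inter> ?f ` (inside J - {z0}) = ?f ` (outside J \<inter> (inside J - {z0}))"
      by (rule inj_on_image_Int[OF injf sub(2,3), symmetric])
    moreover have "outside J \<inter> (inside J - {z0}) = {}" using inside_Int_outside[of J] by blast
    ultimately show ?thesis unfolding A_def B_def by auto
  qed
  have cover: "- ?f ` J \<subseteq> A \<union> B"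
  proof
    fix w assume w: "w \<in> - ?f ` J"
    show "w \<in> A \<union> B"
    proof (cases "w = 0")
      case False
      note pre = inversion_preimage[OF False, of z0]
      have "z0 + inverse w \<notin> J"
      proof
        assume "z0 + inverse w \<in> J"
        then have "w \<in> ?f ` J" using pre(1) by (metis image_eqI)
        then show False using w by blast
      qed
      then have "z0 + inverse w \<in> inside J \<or> z0 + inverse w \<in> outside J"
        using inside_Un_outside[of J] by blast
      then show ?thesis using pre unfolding A_def B_def by (metis Diff_iff UnI1 UnI2 image_eqI singletonD)
    qed (simp add: A_def)
  qed
  have AS: "?f ` outside J \<inter> ?f ` J = {}"
    using inj_on_image_Int[OF injf sub(2,1)] outside_no_overlap[of J] by simp
  show ?thesis
  proof
    fix y assume y: "y \<in> ?f ` outside J"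
    have yS: "y \<notin> ?f ` J" using y AS by blast
    let ?C = "connected_component_set (- ?f ` J) y"
    have CAB: "?C \<subseteq> A \<union> B" using connected_component_subset cover by blast
    moreover have "y \<in> ?C" "y \<in> A" using yS y unfolding A_def by auto
    ultimately have "B \<inter> ?C = {}" using connectedD[OF connected_connected_component oA oB] AB by blast
    then have "bounded ?C" using CAB bA bounded_subset by blast
    then show "y \<in> inside (?f ` J)" using yS unfolding inside_def by blast
  qed
qed

lemma arc_inversion:
  assumes a: "arc g" and z0: "z0 \<notin> path_image g"
  shows "arc (inversion z0 \<circ> g)"
proof -
  have pi: "path_image g \<subseteq> - {z0}" using z0 by blast
  have "continuous_on (path_image g) (inversion z0)"
    using continuous_on_subset[OF inversion_continuous pi] .
  then have "path (inversion z0 \<circ> g)" using arc_imp_path[OF a] by (rule path_continuous_image[rotated])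
  moreover have "inj_on (inversion z0 \<circ> g) {0..1}"
    using comp_inj_on[of g "{0..1}"] a inj_on_subset[OF inversion_inj pi]
    unfolding arc_def path_image_def by blast
  ultimately show ?thesis unfolding arc_def by blast
qed

lemma drawn_inversion:
  assumes D: "drawn V E p \<gamma>" and G: "graph V E"
    and av: "z0 \<notin> p ` V" and ae: "\<And>e. e \<in> E \<Longrightarrow> z0 \<notin> path_image (\<gamma> e)"
  shows "drawn V E (inversion z0 \<circ> p) (\<lambda>e. inversion z0 \<circ> \<gamma> e)"
proof (rule drawnI)
  let ?f = "inversion z0"
  have injf: "inj_on ?f (- {z0})" by (rule inversion_inj)
  have pV: "p ` V \<subseteq> - {z0}" using av by blast
  show "inj_on (?f \<circ> p) V"
    using comp_inj_on[OF drawn_inj[OF D] inj_on_subset[OF injf pV]] .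
next
  fix e assume e: "e \<in> E"
  let ?f = "inversion z0"
  have injf: "inj_on ?f (- {z0})" by (rule inversion_inj)
  have h: "arc (\<gamma> e) \<and> {pathstart (\<gamma> e), pathfinish (\<gamma> e)} = p ` e \<and> path_image (\<gamma> e) \<inter> p ` V = p ` e"
    using drawn_edges[OF D] e by (rule bspec)
  have pi: "path_image (\<gamma> e) \<subseteq> - {z0}" using ae[OF e] by blast
  have pV: "p ` V \<subseteq> - {z0}" using av by blast
  have "arc (?f \<circ> \<gamma> e)" using arc_inversion h ae[OF e] by blast
  moreover have "{pathstart (?f \<circ> \<gamma> e), pathfinish (?f \<circ> \<gamma> e)} = (?f \<circ> p) ` e"
  proof -
    have "{pathstart (?f \<circ> \<gamma> e), pathfinish (?f \<circ> \<gamma> e)} = ?f ` {pathstart (\<gamma> e), pathfinish (\<gamma> e)}"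
      by (simp add: pathstart_compose pathfinish_compose)
    also have "\<dots> = ?f ` (p ` e)" using h by simp
    also have "\<dots> = (?f \<circ> p) ` e" by (simp add: image_comp)
    finally show ?thesis .
  qed
  moreover have "path_image (?f \<circ> \<gamma> e) \<inter> (?f \<circ> p) ` V = (?f \<circ> p) ` e"
  proof -
    have "path_image (?f \<circ> \<gamma> e) \<inter> (?f \<circ> p) ` V = ?f ` path_image (\<gamma> e) \<inter> ?f ` (p ` V)"
      by (simp add: path_image_compose image_comp)
    also have "\<dots> = ?f ` (path_image (\<gamma> e) \<inter> p ` V)"
      by (rule inj_on_image_Int[OF injf pi pV, symmetric])
    finally show ?thesis using h by (simp add: image_comp)
  qed
  ultimately show "arc (?f \<circ> \<gamma> e) \<and> {pathstart (?f \<circ> \<gamma> e), pathfinish (?f \<circ> \<gamma> e)} = (?f \<circ> p) ` e \<and>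
        path_image (?f \<circ> \<gamma> e) \<inter> (?f \<circ> p) ` V = (?f \<circ> p) ` e" by blast
next
  fix e e' assume ee: "e \<in> E" "e' \<in> E" "e \<noteq> e'"
  let ?f = "inversion z0"
  have injf: "inj_on ?f (- {z0})" by (rule inversion_inj)
  have pi: "path_image (\<gamma> e) \<subseteq> - {z0}" "path_image (\<gamma> e') \<subseteq> - {z0}" using ae ee by blast+
  have "path_image (?f \<circ> \<gamma> e) \<inter> path_image (?f \<circ> \<gamma> e') = ?f ` (path_image (\<gamma> e) \<inter> path_image (\<gamma> e'))"
    unfolding path_image_compose by (rule inj_on_image_Int[OF injf pi, symmetric])
  also have "\<dots> \<subseteq> ?f ` (p ` (e \<inter> e'))" using drawn_cross[OF D] ee by blast
  finally show "path_image (?f \<circ> \<gamma> e) \<inter> path_image (?f \<circ> \<gamma> e') \<subseteq> (?f \<circ> p) ` (e \<inter> e')"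
    by (simp add: image_comp)
qed

lemma edges_image_inversion: "edges_image (\<lambda>e. inversion z0 \<circ> \<gamma> e) F = inversion z0 ` edges_image \<gamma> F"
  unfolding edges_image_def path_image_compose by blast

section \<open>Disk drawings\<close>

definition disk_drawing :: "nat \<Rightarrow> 'a set \<Rightarrow> 'a set set \<Rightarrow> ('a \<Rightarrow> complex) \<Rightarrow> ('a set \<Rightarrow> real \<Rightarrow> complex) \<Rightarrow> 'a list \<Rightarrow> bool" where
  "disk_drawing g V E p \<gamma> cs \<longleftrightarrow> graph V E \<and> drawn V E p \<gamma> \<and> girth_at_least g E \<and> is_cycle E cs \<and>
     (\<forall>v\<in>V. p v \<in> edges_image \<gamma> (cycle_edges cs) \<union> inside (edges_image \<gamma> (cycle_edges cs))) \<and>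
     (\<forall>e\<in>E. path_image (\<gamma> e) \<subseteq> edges_image \<gamma> (cycle_edges cs) \<union> inside (edges_image \<gamma> (cycle_edges cs)))"

definition disk_bound :: "nat \<Rightarrow> 'a set \<Rightarrow> 'a set set \<Rightarrow> 'a list \<Rightarrow> bool" where
  "disk_bound g V E cs \<longleftrightarrow> (g - 2) * card E + g + length cs \<le> g * card V"

definition girth_drawing :: "nat \<Rightarrow> 'a set \<Rightarrow> 'a set set \<Rightarrow> ('a \<Rightarrow> complex) \<Rightarrow> ('a set \<Rightarrow> real \<Rightarrow> complex) \<Rightarrow> bool" where
  "girth_drawing g V E p \<gamma> \<longleftrightarrow> graph V E \<and> drawn V E p \<gamma> \<and> girth_at_least g E \<and> V \<noteq> {}"

definition girth_bound :: "nat \<Rightarrow> 'a set \<Rightarrow> 'a set set \<Rightarrow> bool" where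
  "girth_bound g V E \<longleftrightarrow> (g - 2) * card E + g \<le> g * card V"

lemma disk_of_cycle:
  assumes G: "graph V E" and D: "drawn V E p \<gamma>" and gi: "girth_at_least g E"
    and c1: "is_cycle E cs1" and c1V: "set cs1 \<subseteq> V"
  defines "J1 \<equiv> edges_image \<gamma> (cycle_edges cs1)"
  defines "V1 \<equiv> set cs1 \<union> {w \<in> V. p w \<in> inside J1}"
  defines "E1 \<equiv> {e \<in> E. path_image (\<gamma> e) \<subseteq> J1 \<union> inside J1}"
  shows "disk_drawing g V1 E1 p \<gamma> cs1"
proof -
  have ceE: "cycle_edges cs1 \<subseteq> E" using c1 unfolding is_cycle_def by blast
  have l3: "3 \<le> length cs1" using c1 unfolding is_cycle_def by blast
  have Jv: "J1 \<inter> p ` V = p ` set cs1"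
    using edges_image_vert[OF G D ceE] cycle_edges_Union[OF l3] unfolding J1_def by simp
  have V1V: "V1 \<subseteq> V" unfolding V1_def using c1V by blast
  have E1E: "E1 \<subseteq> E" unfolding E1_def by blast
  have ev: "e \<subseteq> V1" if e: "e \<in> E1" for e
    using region_edge_ends[OF G D c1, of e "inside J1"] e unfolding E1_def V1_def J1_def by blast
  have G1: "graph V1 E1" by (rule graph_sub[OF G V1V E1E]) (use ev in blast)
  have D1: "drawn V1 E1 p \<gamma>" by (rule drawn_sub[OF D V1V E1E]) (use ev in blast)
  have gi1: "girth_at_least g E1" by (rule girth_at_least_mono[OF gi E1E])
  have cyc1: "is_cycle E1 cs1"
  proof -
    have "cycle_edges cs1 \<subseteq> E1" unfolding E1_def J1_def edges_image_def using ceE by blast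
    then show ?thesis using c1 unfolding is_cycle_def by blast
  qed
  have vv: "\<forall>v\<in>V1. p v \<in> J1 \<union> inside J1" using Jv unfolding V1_def by blast
  have ee: "\<forall>e\<in>E1. path_image (\<gamma> e) \<subseteq> J1 \<union> inside J1" unfolding E1_def by blast
  show ?thesis unfolding disk_drawing_def using G1 D1 gi1 cyc1 vv ee unfolding J1_def by blast
qed

lemma card_pieces_le:
  assumes "finite X" "X1 \<subseteq> X" "X2 \<subseteq> X" "X1 \<inter> X2 \<subseteq> Y" "finite Y"
  shows "card X1 + card X2 \<le> card X + card Y"
proof -
  have "finite X1" "finite X2" using assms finite_subset by blast+
  then have "card X1 + card X2 = card (X1 \<union> X2) + card (X1 \<inter> X2)" by (rule card_Un_Int)
  moreover have "card (X1 \<union> X2) \<le> card X" using assms by (intro card_mono) auto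
  moreover have "card (X1 \<inter> X2) \<le> card Y" using assms by (intro card_mono) auto
  ultimately show ?thesis by linarith
qed

lemma card_pieces_ge:
  assumes "finite X1" "finite X2" "X \<subseteq> X1 \<union> X2" "Y \<subseteq> X1 \<inter> X2"
  shows "card X + card Y \<le> card X1 + card X2"
proof -
  have "card X1 + card X2 = card (X1 \<union> X2) + card (X1 \<inter> X2)" using assms by (intro card_Un_Int)
  moreover have "card X \<le> card (X1 \<union> X2)" using assms by (intro card_mono) auto
  moreover have "card Y \<le> card (X1 \<inter> X2)" using assms by (intro card_mono) auto
  ultimately show ?thesis by linarith
qed

text \<open>Counting for gluing two pieces that satisfy the bound: if the pieces share at most s
  vertices and at least t edges (and the boundary lengths l1, l2 pay for the overlap), the
  whole satisfies the bound with boundary length l.\<close>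
lemma glue_bound:
  fixes g :: nat
  assumes b1: "(g - 2) * e1 + g + l1 \<le> g * n1" and b2: "(g - 2) * e2 + g + l2 \<le> g * n2"
    and n: "n1 + n2 \<le> n + s" and e: "e + t \<le> e1 + e2"
    and pay: "g * s + l \<le> (g - 2) * t + l1 + l2 + g"
  shows "(g - 2) * e + g + l \<le> g * n"
proof -
  have "(g - 2) * e + (g - 2) * t \<le> (g - 2) * e1 + (g - 2) * e2"
    using mult_le_mono2[OF e, of "g - 2"] by (simp add: distrib_left)
  moreover have "g * n1 + g * n2 \<le> g * n + g * s"
    using mult_le_mono2[OF n, of g] by (simp add: distrib_left)
  ultimately show ?thesis using b1 b2 pay by linarith
qed

lemma mult_minus_two: "2 \<le> g \<Longrightarrow> (g - 2) * x + 2 * x = g * (x::nat)"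
  by (metis add_mult_distrib le_add_diff_inverse2)

text \<open>The ear cuts the disk into two
  smaller disks, bounded by the cycles C1 and C2.\<close>
locale ear =
  fixes g :: nat and V :: "'a set" and E :: "'a set set" and p :: "'a \<Rightarrow> complex"
    and \<gamma> :: "'a set \<Rightarrow> real \<Rightarrow> complex" and cs :: "'a list" and j :: nat and ks :: "'a list"
  assumes disk: "disk_drawing g V E p \<gamma> cs"
    and j: "0 < j" "j < length cs"
    and ks: "distinct ks" "set ks \<inter> set cs = {}" "set ks \<subseteq> V"
    and ear_edges: "path_edges (hd cs # ks @ [cs ! j]) \<subseteq> E"
    and ear_new: "path_edges (hd cs # ks @ [cs ! j]) \<inter> cycle_edges cs = {}"
begin

definition "u = hd cs"
definition "v = cs ! j"
definition "P = hd cs # ks @ [cs ! j]"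
definition "L1 = take (Suc j) cs"
definition "L2 = hd cs # rev (drop j cs)"
definition "C1 = take (Suc j) cs @ rev ks"
definition "C2 = drop j cs @ hd cs # ks"
definition "J = edges_image \<gamma> (cycle_edges cs)"
definition "J1 = edges_image \<gamma> (cycle_edges C1)"
definition "J2 = edges_image \<gamma> (cycle_edges C2)"
definition "V1 = set C1 \<union> {w \<in> V. p w \<in> inside J1}"
definition "E1 = {e \<in> E. path_image (\<gamma> e) \<subseteq> J1 \<union> inside J1}"
definition "V2 = set C2 \<union> {w \<in> V. p w \<in> inside J2}"
definition "E2 = {e \<in> E. path_image (\<gamma> e) \<subseteq> J2 \<union> inside J2}"

lemma G: "graph V E" and D: "drawn V E p \<gamma>" and gi: "girth_at_least g E" and cy: "is_cycle E cs"
  and in_disk_V: "\<forall>w\<in>V. p w \<in> J \<union> inside J" and in_disk_E: "\<forall>e\<in>E. path_image (\<gamma> e) \<subseteq> J \<union> inside J"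
  using disk unfolding disk_drawing_def J_def by blast+

lemma dcs: "distinct cs" and m3: "3 \<le> length cs" and ceE: "cycle_edges cs \<subseteq> E"
  using cy unfolding is_cycle_def by auto

lemma csV: "set cs \<subseteq> V" by (rule is_cycle_set_sub[OF G cy])

lemmas split = cycle_split_arcs[OF dcs m3 j, folded L1_def L2_def u_def v_def]
  cycle_split_vertices[OF dcs m3 j, folded L1_def L2_def u_def v_def]
  cycle_split_edges[OF dcs m3 j, folded L1_def L2_def u_def v_def]
lemmas cycles = ear_cycles[OF dcs m3 j ks(1,2) ear_new, folded L1_def L2_def P_def C1_def C2_def]

lemma cs_ne: "cs \<noteq> []" using m3 by auto

lemma uv_cs: "u \<in> set cs" "v \<in> set cs"
  using j hd_in_set[OF cs_ne] by (auto simp: u_def v_def)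

lemma uv: "u \<noteq> v" "u \<in> V" "v \<in> V"
proof -
  show "u \<in> V" "v \<in> V" using uv_cs csV by auto
  show "u \<noteq> v" using nth_eq_iff_index_eq[OF dcs, of 0 j] j cs_ne by (auto simp: u_def v_def hd_conv_nth)
qed

lemma P: "distinct P" "2 \<le> length P" "path_edges P \<subseteq> E" "hd P = u" "last P = v"
  "set P = insert u (insert v (set ks))"
  using ks uv uv_cs ear_edges unfolding P_def by (auto simp: u_def v_def)


lemma L1: "distinct L1" "2 \<le> length L1" "path_edges L1 \<subseteq> E" "hd L1 = u" "last L1 = v"
  using split(1-4,12) j ceE by auto

lemma L2: "distinct L2" "2 \<le> length L2" "path_edges L2 \<subseteq> E" "hd L2 = u" "last L2 = v"
  using split(5-8,12) j ceE by auto

lemma L_P_meet: "set L1 \<inter> set P = {u, v}" "set L2 \<inter> set P = {u, v}"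
proof -
  have "set L1 \<subseteq> set cs" "set L2 \<subseteq> set cs" using split(9) by blast+
  moreover have "u \<in> set L1" "v \<in> set L1" "u \<in> set L2" "v \<in> set L2" using split(10) by blast+
  ultimately show "set L1 \<inter> set P = {u, v}" "set L2 \<inter> set P = {u, v}"
    using P(6) ks(2) by auto
qed

lemma L_P_disjoint: "path_edges L1 \<inter> path_edges P = {}" "path_edges L2 \<inter> path_edges P = {}"
  using ear_new split(12) unfolding P_def by blast+

lemma J_eq: "J = edges_image \<gamma> (path_edges L1 \<union> path_edges L2)"
  unfolding J_def split(12) ..

lemma J1_eq: "J1 = edges_image \<gamma> (path_edges L1 \<union> path_edges P)"
  unfolding J1_def cycles(5) ..

lemma J2_eq: "J2 = edges_image \<gamma> (path_edges L2 \<union> path_edges P)"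
  unfolding J2_def cycles(10) ..

lemma interior_edge: "e \<in> E \<Longrightarrow> e \<notin> cycle_edges cs \<Longrightarrow> edge_interior \<gamma> p e \<subseteq> inside J"
  using edge_interior_avoids_image[OF G D _ ceE] in_disk_E unfolding J_def edge_interior_def by blast

lemma inside_split: "inside J1 \<inter> inside J2 = {}"
  "inside J1 \<union> inside J2 \<union> (edges_image \<gamma> (path_edges P) - {p u, p v}) = inside J"
proof -
  obtain e where e: "e \<in> path_edges P" using path_edges_ne[OF P(2)] by blast
  then have eE: "e \<in> E" and ec: "e \<notin> cycle_edges cs" using P(3) ear_new by (auto simp: P_def)
  obtain z where z: "z \<in> edge_interior \<gamma> p e" using edge_interior_ne[OF G D eE] by blast
  then have "z \<in> edges_image \<gamma> (path_edges P) \<inter> inside J"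
    using interior_edge[OF eE ec] e unfolding edge_interior_def edges_image_def by blast
  then have ne: "edges_image \<gamma> (path_edges P) \<inter> inside (edges_image \<gamma> (path_edges L1 \<union> path_edges L2)) \<noteq> {}"
    unfolding J_eq by blast
  note T = theta_split[OF G D uv(2,3,1) L1 L2 P(1-5) split(13) L_P_disjoint split(10) L_P_meet ne]
  show "inside J1 \<inter> inside J2 = {}"
    "inside J1 \<union> inside J2 \<union> (edges_image \<gamma> (path_edges P) - {p u, p v}) = inside J"
    using T unfolding J_eq J1_eq J2_eq by blast+
qed

lemma C_cycles: "is_cycle E C1" "is_cycle E C2" "set C1 \<subseteq> V" "set C2 \<subseteq> V"
proof -
  show "is_cycle E C1" "is_cycle E C2"
    unfolding is_cycle_def using cycles L1(3) L2(3) P(3) by auto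
  then show "set C1 \<subseteq> V" "set C2 \<subseteq> V" using is_cycle_set_sub[OF G] by blast+
qed

lemma subdisks: "disk_drawing g V1 E1 p \<gamma> C1" "disk_drawing g V2 E2 p \<gamma> C2"
  using disk_of_cycle[OF G D gi C_cycles(1,3)] disk_of_cycle[OF G D gi C_cycles(2,4)]
  unfolding V1_def E1_def V2_def E2_def J1_def J2_def by blast+

lemma sub_V: "V1 \<subseteq> V" "V2 \<subseteq> V" and sub_E: "E1 \<subseteq> E" "E2 \<subseteq> E"
  using C_cycles unfolding V1_def V2_def E1_def E2_def by blast+

text \<open>Each smaller disk misses an edge of the boundary arc on the other side.\<close>
lemma proper: "E1 \<subset> E" "E2 \<subset> E"
proof -
  have IJ: "inside J1 \<subseteq> inside J" "inside J2 \<subseteq> inside J" using inside_split(2) by blast+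
  have ce: "cycle_edges C1 \<subseteq> E" "cycle_edges C2 \<subseteq> E"
    using C_cycles unfolding is_cycle_def by blast+
  obtain e2 where e2: "e2 \<in> path_edges L2" using path_edges_ne[OF L2(2)] by blast
  have "path_image (\<gamma> e2) \<subseteq> J" using e2 unfolding J_eq edges_image_def by blast
  moreover have "e2 \<notin> cycle_edges C1" using e2 cycles(5) split(13) L_P_disjoint by blast
  ultimately have "e2 \<notin> E1"
    using edge_outside_subregion[OF G D _ _ ce(1)] e2 L2(3) IJ(1) unfolding E1_def J1_def by blast
  then show "E1 \<subset> E" using sub_E e2 L2(3) by blast
  obtain e1 where e1: "e1 \<in> path_edges L1" using path_edges_ne[OF L1(2)] by blast
  have "path_image (\<gamma> e1) \<subseteq> J" using e1 unfolding J_eq edges_image_def by blast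
  moreover have "e1 \<notin> cycle_edges C2" using e1 cycles(10) split(13) L_P_disjoint by blast
  ultimately have "e1 \<notin> E2"
    using edge_outside_subregion[OF G D _ _ ce(2)] e1 L1(3) IJ(2) unfolding E2_def J2_def by blast
  then show "E2 \<subset> E" using sub_E e1 L1(3) by blast
qed



lemma C_on_J: "p ` set C1 \<subseteq> J1" "p ` set C2 \<subseteq> J2"
proof -
  have "cycle_edges C1 \<subseteq> E" "cycle_edges C2 \<subseteq> E" using C_cycles(1,2) unfolding is_cycle_def by blast+
  then have "J1 \<inter> p ` V = p ` set C1" "J2 \<inter> p ` V = p ` set C2"
    using edges_image_vert[OF G D] cycle_edges_Union[OF cycles(2)] cycle_edges_Union[OF cycles(7)]
    unfolding J1_def J2_def by simp_all
  then show "p ` set C1 \<subseteq> J1" "p ` set C2 \<subseteq> J2" by blast+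
qed

lemma boundary_apart: "J1 \<inter> inside J2 = {}" "J2 \<inter> inside J1 = {}"
proof -
  have IJ: "inside J1 \<subseteq> inside J" "inside J2 \<subseteq> inside J" using inside_split(2) by blast+
  have JI: "J \<inter> inside J = {}" by (rule inside_no_overlap[THEN trans[OF Int_commute]])
  have L: "edges_image \<gamma> (path_edges L1) \<subseteq> J" "edges_image \<gamma> (path_edges L2) \<subseteq> J"
    unfolding J_eq edges_image_Un by blast+
  have "edges_image \<gamma> (path_edges P) \<inter> inside J2 = {}"
    using inside_no_overlap[of J2] unfolding J2_eq edges_image_Un by blast
  moreover have "edges_image \<gamma> (path_edges P) \<inter> inside J1 = {}"
    using inside_no_overlap[of J1] unfolding J1_eq edges_image_Un by blast
  moreover have "edges_image \<gamma> (path_edges L1) \<inter> inside J2 = {}"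
    "edges_image \<gamma> (path_edges L2) \<inter> inside J1 = {}" using L IJ JI by blast+
  ultimately show "J1 \<inter> inside J2 = {}" "J2 \<inter> inside J1 = {}"
    unfolding J1_eq J2_eq edges_image_Un by blast+
qed

lemma vertex_cover: "V \<subseteq> V1 \<union> V2" "V1 \<inter> V2 \<subseteq> set P"
proof -
  have CP: "set L1 \<subseteq> set C1" "set L2 \<subseteq> set C2" "set P \<subseteq> set C1"
    using cycles(4,9) P(6) split(10) by auto
  show "V \<subseteq> V1 \<union> V2"
  proof
    fix w assume w: "w \<in> V"
    consider "p w \<in> J" | "p w \<in> inside J1" | "p w \<in> inside J2" | "p w \<in> edges_image \<gamma> (path_edges P)"
      using in_disk_V w inside_split(2) by blast
    then show "w \<in> V1 \<union> V2"
    proof cases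
      case 1
      then have "w \<in> set cs"
        using vertex_on_edges_image[OF G D ceE w] cycle_edges_Union[OF m3] unfolding J_def by simp
      then show ?thesis using split(9) CP unfolding V1_def V2_def by blast
    next
      case 4
      then have "w \<in> set P" using vertex_on_edges_image[OF G D P(3) w] path_edges_Union[OF P(2)] by simp
      then show ?thesis using CP unfolding V1_def by blast
    qed (use w in \<open>auto simp: V1_def V2_def\<close>)
  qed
  show "V1 \<inter> V2 \<subseteq> set P"
  proof
    fix w assume w: "w \<in> V1 \<inter> V2"
    show "w \<in> set P"
    proof (cases "w \<in> set C1")
      case True
      then have "p w \<notin> inside J2" using C_on_J(1) boundary_apart(1) by blast
      then have "w \<in> set C2" using w unfolding V2_def by blast
      then show ?thesis using True cycles(4,9) split(10) P(6) by auto
    next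
      case False
      then have "p w \<in> inside J1" using w unfolding V1_def by blast
      then show ?thesis using w C_on_J(2) boundary_apart(2) inside_split(1) unfolding V2_def by blast
    qed
  qed
qed


lemma edge_cover: "E \<subseteq> E1 \<union> E2" "path_edges P \<subseteq> E1 \<inter> E2"
proof -
  show "path_edges P \<subseteq> E1 \<inter> E2"
    using P(3) unfolding E1_def E2_def J1_eq J2_eq edges_image_def by blast
  have closed: "closed J1" "closed J2"
    using cycle_jordan[OF G D C_cycles(1)] cycle_jordan[OF G D C_cycles(2)] unfolding J1_def J2_def by blast+
  show "E \<subseteq> E1 \<union> E2"
  proof
    fix e assume eE: "e \<in> E"
    consider "e \<in> path_edges L1 \<union> path_edges P" | "e \<in> path_edges L2"
      | "e \<notin> cycle_edges cs" "e \<notin> path_edges P"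
      using split(12) by blast
    then show "e \<in> E1 \<union> E2"
    proof cases
      case 1
      then show ?thesis using eE unfolding E1_def J1_eq edges_image_def by blast
    next
      case 2
      then show ?thesis using eE unfolding E2_def J2_eq edges_image_def by blast
    next
      case 3
      have "edge_interior \<gamma> p e \<inter> edges_image \<gamma> (path_edges P) = {}"
        by (rule edge_interior_avoids_image[OF G D eE P(3) 3(2)])
      then have "edge_interior \<gamma> p e \<subseteq> inside J1 \<union> inside J2"
        using interior_edge[OF eE 3(1)] inside_split(2) by blast
      then have "path_image (\<gamma> e) \<subseteq> closure (inside J1) \<or> path_image (\<gamma> e) \<subseteq> closure (inside J2)"
        by (rule edge_in_one_region[OF G D eE open_inside[OF closed(1)] open_inside[OF closed(2)]
              inside_split(1)])
      then show ?thesis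
        using closure_inside_subset[OF closed(1)] closure_inside_subset[OF closed(2)] eE
        unfolding E1_def E2_def by blast
    qed
  qed
qed

end

text \<open>The ear step of the induction: if the disk contains an ear, the bound follows from the
  bounds for the two smaller disks it creates.\<close>
lemma disk_bound_ear:
  fixes V :: "'a set"
  assumes g3: "3 \<le> g" and ear: "ear g V E p \<gamma> cs j ks"
    and IH: "\<And>V' E' (p'::'a \<Rightarrow> complex) \<gamma>' cs'. card V' + card E' < card V + card E \<Longrightarrow>
               disk_drawing g V' E' p' \<gamma>' cs' \<Longrightarrow> disk_bound g V' E' cs'"
  shows "disk_bound g V E cs"
proof -
  interpret ear g V E p \<gamma> cs j ks by (rule ear)
  have finV: "finite V" and finE: "finite E" using graph_finite_vertices[OF G] graph_finite_edges[OF G] .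
  have "card E1 < card E" "card E2 < card E" using psubset_card_mono[OF finE] proper by blast+
  moreover have "card V1 \<le> card V" "card V2 \<le> card V" using card_mono[OF finV] sub_V by blast+
  ultimately have b1: "disk_bound g V1 E1 C1" and b2: "disk_bound g V2 E2 C2"
    using IH[OF _ subdisks(1)] IH[OF _ subdisks(2)] by simp_all
  have "card V1 + card V2 \<le> card V + card (set P)"
    by (rule card_pieces_le[OF finV sub_V vertex_cover(2)]) simp
  moreover have "card E + card (path_edges P) \<le> card E1 + card E2"
    using finE sub_E finite_subset by (intro card_pieces_ge[OF _ _ edge_cover]) blast+
  moreover have "card (set P) = length ks + 2" "card (path_edges P) = length ks + 1"
    using distinct_card[OF P(1)] path_edges_card[OF P(1)] by (simp_all add: P_def)
  ultimately have nV: "card V1 + card V2 \<le> card V + (length ks + 2)"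
    and nE: "card E + (length ks + 1) \<le> card E1 + card E2" by simp_all
  have "g * (length ks + 2) + length cs \<le> (g - 2) * (length ks + 1) + length C1 + length C2 + g"
    using mult_minus_two[of g "length ks + 1"] g3 cycles(3,8) j by (simp add: algebra_simps)
  then show ?thesis
    using glue_bound[OF b1[unfolded disk_bound_def] b2[unfolded disk_bound_def] nV nE]
    unfolding disk_bound_def by blast
qed

text \<open>The ear step for an ear between any two distinct vertices of the boundary cycle:
  rotate the cycle so that the ear starts at its head.\<close>
lemma disk_bound_ear_between:
  fixes V :: "'a set"
  assumes g3: "3 \<le> g" and H: "disk_drawing g V E p \<gamma> cs"
    and IH: "\<And>V' E' (p'::'a \<Rightarrow> complex) \<gamma>' cs'. card V' + card E' < card V + card E \<Longrightarrow>
               disk_drawing g V' E' p' \<gamma>' cs' \<Longrightarrow> disk_bound g V' E' cs'"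
    and uv: "u \<in> set cs" "v \<in> set cs" "u \<noteq> v"
    and ks: "distinct ks" "set ks \<inter> set cs = {}" "set ks \<subseteq> V"
    and ear_edges: "path_edges (u # ks @ [v]) \<subseteq> E"
    and ear_new: "path_edges (u # ks @ [v]) \<inter> cycle_edges cs = {}"
  shows "disk_bound g V E cs"
proof -
  have cy: "is_cycle E cs" using H unfolding disk_drawing_def by blast
  obtain cs' where cs': "is_cycle E cs'" "cycle_edges cs' = cycle_edges cs" "set cs' = set cs"
    "length cs' = length cs" "hd cs' = u"
    using is_cycle_rotate_hd[OF cy uv(1)] by blast
  obtain j where j: "j < length cs'" "cs' ! j = v" using uv(2) cs'(3) by (metis in_set_conv_nth)
  have "cs' \<noteq> []" using j by auto
  have "j \<noteq> 0"
  proof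
    assume "j = 0"
    then show False using j cs'(5) uv(3) hd_conv_nth[OF \<open>cs' \<noteq> []\<close>] by simp
  qed
  have "ear g V E p \<gamma> cs' j ks"
  proof
    show "disk_drawing g V E p \<gamma> cs'" using H cs' unfolding disk_drawing_def by simp
    show "0 < j" "j < length cs'" using j \<open>j \<noteq> 0\<close> by auto
    show "distinct ks" "set ks \<inter> set cs' = {}" "set ks \<subseteq> V" using ks cs'(3) by auto
    show "path_edges (hd cs' # ks @ [cs' ! j]) \<subseteq> E"
      "path_edges (hd cs' # ks @ [cs' ! j]) \<inter> cycle_edges cs' = {}"
      using ear_edges ear_new unfolding cs'(2,5) j(2) by auto
  qed
  then have "disk_bound g V E cs'" by (rule disk_bound_ear[OF g3 _ IH])
  then show ?thesis using cs'(4) unfolding disk_bound_def by simp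
qed

definition off_cycle_adj :: "'a set \<Rightarrow> 'a set set \<Rightarrow> 'a list \<Rightarrow> 'a \<Rightarrow> 'a \<Rightarrow> bool" where
  "off_cycle_adj V E cs x y \<longleftrightarrow> x \<in> V - set cs \<and> y \<in> V - set cs \<and> {x, y} \<in> E"

definition off_cycle_component :: "'a set \<Rightarrow> 'a set set \<Rightarrow> 'a list \<Rightarrow> 'a \<Rightarrow> 'a set" where
  "off_cycle_component V E cs w = {y. (off_cycle_adj V E cs)\<^sup>*\<^sup>* w y}"

definition attachments :: "'a set \<Rightarrow> 'a set set \<Rightarrow> 'a list \<Rightarrow> 'a \<Rightarrow> 'a set" where
  "attachments V E cs w = {c \<in> set cs. \<exists>y\<in>off_cycle_component V E cs w. {c, y} \<in> E}"

lemma off_cycle_component_sub: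
  assumes "w \<in> V - set cs"
  shows "off_cycle_component V E cs w \<subseteq> V - set cs" "w \<in> off_cycle_component V E cs w"
proof -
  show "w \<in> off_cycle_component V E cs w" unfolding off_cycle_component_def by simp
  show "off_cycle_component V E cs w \<subseteq> V - set cs"
  proof
    fix y assume "y \<in> off_cycle_component V E cs w"
    then have "(off_cycle_adj V E cs)\<^sup>*\<^sup>* w y" unfolding off_cycle_component_def by simp
    then show "y \<in> V - set cs"
      by (induction rule: rtranclp_induct) (use assms in \<open>auto simp: off_cycle_adj_def\<close>)
  qed
qed

lemma off_cycle_component_closed:
  assumes "x \<in> off_cycle_component V E cs w" "y \<in> V - set cs" "{x, y} \<in> E" "w \<in> V - set cs"
  shows "y \<in> off_cycle_component V E cs w"
proof -
  have "off_cycle_adj V E cs x y" using assms off_cycle_component_sub[OF assms(4)]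
    unfolding off_cycle_adj_def by blast
  then show ?thesis using assms(1) unfolding off_cycle_component_def
    by (simp add: rtranclp.rtrancl_into_rtrancl)
qed

lemma off_cycle_component_path:
  assumes w: "w \<in> V - set cs"
    and x: "x \<in> off_cycle_component V E cs w" and y: "y \<in> off_cycle_component V E cs w"
  shows "\<exists>zs. distinct (x # zs) \<and> last (x # zs) = y \<and> set (x # zs) \<subseteq> V - set cs \<and> path_edges (x # zs) \<subseteq> E"
proof -
  let ?R = "off_cycle_adj V E cs"
  have symR: "symp ?R" unfolding off_cycle_adj_def symp_def by (auto simp: insert_commute)
  have "?R\<^sup>*\<^sup>* w x" "?R\<^sup>*\<^sup>* w y" using x y unfolding off_cycle_component_def by auto
  then have "?R\<^sup>*\<^sup>* x y" using sympD[OF symp_rtranclp[OF symR]] rtranclp_trans by metis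
  then obtain zs0 where "rtrancl_path ?R x zs0 y" using rtranclp_eq_rtrancl_path by metis
  then obtain zs where zs: "rtrancl_path ?R x zs y" "distinct (x # zs)"
    using rtrancl_path_distinct by metis
  note facts = path_edges_rtrancl_path[OF zs(1)]
  have "set (x # zs) \<subseteq> V - set cs"
    using facts off_cycle_component_sub[OF w] x unfolding off_cycle_adj_def by auto
  moreover have "path_edges (x # zs) \<subseteq> E" using facts unfolding off_cycle_adj_def by blast
  ultimately show ?thesis using zs(2) facts by blast
qed

text \<open>A component off the cycle attached at two distinct vertices u, v yields an ear from u
  to v running through the component.\<close>
lemma disk_bound_two_attachments:
  fixes V :: "'a set"
  assumes g3: "3 \<le> g" and H: "disk_drawing g V E p \<gamma> cs"
    and IH: "\<And>V' E' (p'::'a \<Rightarrow> complex) \<gamma>' cs'. card V' + card E' < card V + card E \<Longrightarrow>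
               disk_drawing g V' E' p' \<gamma>' cs' \<Longrightarrow> disk_bound g V' E' cs'"
    and w: "w \<in> V - set cs"
    and uv: "u \<in> attachments V E cs w" "v \<in> attachments V E cs w" "u \<noteq> v"
  shows "disk_bound g V E cs"
proof -
  have cy: "is_cycle E cs" using H unfolding disk_drawing_def by blast
  obtain x where x: "x \<in> off_cycle_component V E cs w" "{u, x} \<in> E" and u: "u \<in> set cs"
    using uv(1) unfolding attachments_def by blast
  obtain y where y: "y \<in> off_cycle_component V E cs w" "{v, y} \<in> E" and v: "v \<in> set cs"
    using uv(2) unfolding attachments_def by blast
  obtain zs where zs: "distinct (x # zs)" "last (x # zs) = y" "set (x # zs) \<subseteq> V - set cs"
    "path_edges (x # zs) \<subseteq> E"
    using off_cycle_component_path[OF w x(1) y(1)] by blast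
  define ks where "ks = x # zs"
  have P: "path_edges (u # ks @ [v]) = insert {u, x} (insert {y, v} (path_edges ks))"
    using path_edges_snoc[of ks v] zs(2) unfolding ks_def by simp
  have ks: "distinct ks" "set ks \<inter> set cs = {}" "set ks \<subseteq> V" using zs(1,3) unfolding ks_def by auto
  have peE: "path_edges (u # ks @ [v]) \<subseteq> E"
    using P zs(4) x(2) y(2) unfolding ks_def by (auto simp: insert_commute)
  have Pdis: "path_edges (u # ks @ [v]) \<inter> cycle_edges cs = {}"
  proof -
    have "e \<inter> set ks \<noteq> {}" if "e \<in> path_edges (u # ks @ [v])" for e
    proof -
      have "y \<in> set ks" using zs(2) last_in_set[of ks] unfolding ks_def by auto
      moreover have "e \<subseteq> set ks" "e \<noteq> {}" if "e \<in> path_edges ks"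
        using that path_edges_Union_sub[of ks] path_edges_nonempty by blast+
      ultimately show ?thesis using \<open>e \<in> path_edges (u # ks @ [v])\<close> P unfolding ks_def by auto
    qed
    moreover have "e \<subseteq> set cs" if "e \<in> cycle_edges cs" for e
      using that cycle_edges_Union[of cs] cy unfolding is_cycle_def by blast
    ultimately show ?thesis using zs(3) unfolding ks_def by blast
  qed
  show ?thesis by (rule disk_bound_ear_between[OF g3 H IH u v uv(3) ks peE Pdis])
qed

lemma disk_drawing_remove:
  assumes H: "disk_drawing g V E p \<gamma> cs" and K: "K \<subseteq> V - set cs"
  shows "disk_drawing g (V - K) {e \<in> E. e \<inter> K = {}} p \<gamma> cs"
proof -
  have G: "graph V E" and D: "drawn V E p \<gamma>" and gi: "girth_at_least g E" and cy: "is_cycle E cs"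
    using H unfolding disk_drawing_def by blast+
  define V' where "V' = V - K"
  define E' where "E' = {e \<in> E. e \<inter> K = {}}"
  have V'V: "V' \<subseteq> V" and E'E: "E' \<subseteq> E" and e'v: "\<forall>e\<in>E'. e \<subseteq> V'"
    using graph_edge_sub[OF G] unfolding V'_def E'_def by blast+
  have "cycle_edges cs \<subseteq> E'"
    using cy cycle_edges_Union[of cs] K unfolding E'_def is_cycle_def by blast
  then have "is_cycle E' cs" using cy unfolding is_cycle_def by blast
  then show ?thesis
    using H graph_sub[OF G V'V E'E e'v] drawn_sub[OF D V'V E'E e'v] girth_at_least_mono[OF gi E'E]
      V'V E'E unfolding disk_drawing_def V'_def E'_def by blast
qed

lemma component_edge_cover:
  assumes G: "graph V E" and w: "w \<in> V - set cs"
  defines "K \<equiv> off_cycle_component V E cs w"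
  shows "E \<subseteq> {e \<in> E. e \<inter> K = {}} \<union> {e \<in> E. e \<subseteq> K \<union> attachments V E cs w}"
proof
  fix e assume e: "e \<in> E"
  show "e \<in> {e \<in> E. e \<inter> K = {}} \<union> {e \<in> E. e \<subseteq> K \<union> attachments V E cs w}"
  proof (cases "e \<inter> K = {}")
    case False
    then obtain x where x: "x \<in> e" "x \<in> K" by blast
    obtain y where y: "e = {x, y}" "y \<in> V" using edge_other[OF G e x(1)] by blast
    have "y \<in> K \<union> attachments V E cs w"
    proof (cases "y \<in> set cs")
      case True
      have "{y, x} \<in> E" using e y(1) by (simp add: insert_commute)
      then show ?thesis using True x(2) unfolding attachments_def K_def by blast
    next
      case False
      then show ?thesis using off_cycle_component_closed[of x V E cs w y] x(2) y e w unfolding K_def by blast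
    qed
    then show ?thesis using y(1) x(2) e by blast
  qed (use e in blast)
qed

text \<open>A component off the cycle attached at no more than one cycle vertex can be cut off:
  the rest is a smaller disk, and the component together with its attachment is a smaller
  drawn graph of the same girth.\<close>
lemma disk_bound_one_attachment:
  fixes V :: "'a set"
  assumes H: "disk_drawing g V E p \<gamma> cs"
    and IHD: "\<And>V' E' (p'::'a \<Rightarrow> complex) \<gamma>' cs'. card V' + card E' < card V + card E \<Longrightarrow>
               disk_drawing g V' E' p' \<gamma>' cs' \<Longrightarrow> disk_bound g V' E' cs'"
    and IHG: "\<And>V' E' (p'::'a \<Rightarrow> complex) \<gamma>'. card V' + card E' < card V + card E \<Longrightarrow>
               girth_drawing g V' E' p' \<gamma>' \<Longrightarrow> girth_bound g V' E'"
    and w: "w \<in> V - set cs" and A1: "card (attachments V E cs w) \<le> 1"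
  shows "disk_bound g V E cs"
proof -
  have G: "graph V E" and D: "drawn V E p \<gamma>" and gi: "girth_at_least g E" and cy: "is_cycle E cs"
    using H unfolding disk_drawing_def by blast+
  have dcs: "distinct cs" and m3: "3 \<le> length cs" using cy unfolding is_cycle_def by auto
  have csV: "set cs \<subseteq> V" by (rule is_cycle_set_sub[OF G cy])
  have finV: "finite V" and finE: "finite E" using graph_finite_vertices[OF G] graph_finite_edges[OF G] .
  define K where "K = off_cycle_component V E cs w"
  define A where "A = attachments V E cs w"
  have K: "K \<subseteq> V - set cs" "w \<in> K" using off_cycle_component_sub[OF w] unfolding K_def by auto
  have finK: "finite K" using K(1) finV finite_subset by blast
  have finA: "finite A" and A: "A \<subseteq> set cs" unfolding A_def attachments_def by auto
  define V' where "V' = V - K"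
  define E' where "E' = {e \<in> E. e \<inter> K = {}}"
  have E'E: "E' \<subseteq> E" unfolding E'_def by blast
  have KV: "K \<subseteq> V" using K(1) by blast
  have cV: "card V = card V' + card K"
    unfolding V'_def using card_Diff_subset[OF finK KV] card_mono[OF finV KV] by simp
  have "card K \<ge> 1" using finK K(2) by (metis One_nat_def Suc_leI card_gt_0_iff empty_iff)
  moreover have "card E' \<le> card E" using card_mono[OF finE E'E] .
  moreover have "disk_drawing g V' E' p \<gamma> cs"
    using disk_drawing_remove[OF H K(1)] unfolding V'_def E'_def .
  ultimately have b1: "disk_bound g V' E' cs" by (intro IHD) (use cV in simp_all)
  define VK where "VK = K \<union> A"
  define EK where "EK = {e \<in> E. e \<subseteq> K \<union> A}"
  have VKV: "VK \<subseteq> V" and EKE: "EK \<subseteq> E" and ekv: "\<forall>e\<in>EK. e \<subseteq> VK"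
    using K(1) A csV unfolding VK_def EK_def by blast+
  have "girth_drawing g VK EK p \<gamma>"
    unfolding girth_drawing_def using graph_sub[OF G VKV EKE ekv] drawn_sub[OF D VKV EKE ekv]
      girth_at_least_mono[OF gi EKE] K(2) VK_def by blast
  moreover have "card VK < card V"
  proof -
    have "\<not> set cs \<subseteq> A"
    proof
      assume "set cs \<subseteq> A"
      then have "length cs \<le> card A" using card_mono[OF finA] distinct_card[OF dcs] by metis
      then show False using A1 m3 unfolding A_def by linarith
    qed
    then obtain c where "c \<in> set cs" "c \<notin> VK" using K(1) unfolding VK_def by blast
    then have "VK \<subset> V" using VKV csV by blast
    then show ?thesis using psubset_card_mono[OF finV] by blast
  qed
  moreover have "card EK \<le> card E" using card_mono[OF finE EKE] .
  ultimately have b2: "girth_bound g VK EK" by (intro IHG) simp_all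
  have "E \<subseteq> E' \<union> EK" using component_edge_cover[OF G w] unfolding E'_def EK_def K_def A_def .
  then have "card E \<le> card E' + card EK"
    using card_mono[of "E' \<union> EK"] card_Un_le[of E' EK] finE E'E EKE finite_subset
    by (meson finite_UnI le_trans)
  moreover have "card V' + card VK \<le> card V + 1"
    using cV card_Un_le[of K A] A1 unfolding VK_def A_def by simp
  moreover have "(g - 2) * card EK + g + 0 \<le> g * card VK" using b2 unfolding girth_bound_def by simp
  ultimately show ?thesis
    using glue_bound[OF b1[unfolded disk_bound_def], of "card EK" 0 "card VK" "card V" 1 "card E" 0]
    unfolding disk_bound_def by simp
qed

text \<open>A disk consisting of its boundary cycle alone: the bound is the girth condition.\<close>
lemma disk_bound_bare_cycle:
  assumes g3: "3 \<le> g" and H: "disk_drawing g V E p \<gamma> cs"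
    and V: "V = set cs" and no_chord: "\<forall>e\<in>E. e \<subseteq> set cs \<longrightarrow> e \<in> cycle_edges cs"
  shows "disk_bound g V E cs"
proof -
  have G: "graph V E" and gi: "girth_at_least g E" and cy: "is_cycle E cs"
    using H unfolding disk_drawing_def by blast+
  have dcs: "distinct cs" and m3: "3 \<le> length cs" using cy unfolding is_cycle_def by auto
  have "E \<subseteq> cycle_edges cs" using no_chord graph_edge_sub[OF G] V by blast
  moreover have "finite (cycle_edges cs)" by (simp add: cycle_edges_def path_edges_finite)
  ultimately have "card E \<le> length cs" using card_mono cycle_edges_card[OF dcs m3] by metis
  then have "(g - 2) * card E \<le> (g - 2) * length cs" by (rule mult_le_mono2)
  moreover have "g * card V = g * length cs" using V distinct_card[OF dcs] by simp
  moreover have "g \<le> length cs" using gi cy unfolding girth_at_least_def by blast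
  ultimately show ?thesis using mult_minus_two[of g "length cs"] g3 unfolding disk_bound_def by linarith
qed

lemma disk_cases:
  assumes G: "graph V E" and cy: "is_cycle E cs"
  obtains (chord) e where "e \<in> E" "e \<notin> cycle_edges cs" "e \<subseteq> set cs"
    | (two) w u v where "w \<in> V - set cs" "u \<in> attachments V E cs w" "v \<in> attachments V E cs w" "u \<noteq> v"
    | (one) w where "w \<in> V - set cs" "card (attachments V E cs w) \<le> 1"
    | (bare) "V = set cs" "\<forall>e\<in>E. e \<subseteq> set cs \<longrightarrow> e \<in> cycle_edges cs"
proof (cases "\<exists>e\<in>E. e \<notin> cycle_edges cs \<and> e \<subseteq> set cs")
  case True
  then show thesis using that(1) by blast
next
  case no_chord: False
  show thesis
  proof (cases "V = set cs")
    case True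
    then show thesis using that(4) no_chord by blast
  next
    case False
    then obtain w where w: "w \<in> V - set cs" using is_cycle_set_sub[OF G cy] by blast
    have fin: "finite (attachments V E cs w)" unfolding attachments_def by simp
    show thesis
    proof (cases "card (attachments V E cs w) \<le> 1")
      case True
      then show thesis using that(3) w by blast
    next
      case False
      then obtain u v where "u \<in> attachments V E cs w" "v \<in> attachments V E cs w" "u \<noteq> v"
        using card_le_Suc0_iff_eq[OF fin] by auto
      then show thesis using that(2) w by blast
    qed
  qed
qed

lemma disk_bound_step:
  fixes V :: "'a set"
  assumes g3: "3 \<le> g" and H: "disk_drawing g V E p \<gamma> cs"
    and IHD: "\<And>V' E' (p'::'a \<Rightarrow> complex) \<gamma>' cs'. card V' + card E' < card V + card E \<Longrightarrow>
               disk_drawing g V' E' p' \<gamma>' cs' \<Longrightarrow> disk_bound g V' E' cs'"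
    and IHG: "\<And>V' E' (p'::'a \<Rightarrow> complex) \<gamma>'. card V' + card E' < card V + card E \<Longrightarrow>
               girth_drawing g V' E' p' \<gamma>' \<Longrightarrow> girth_bound g V' E'"
  shows "disk_bound g V E cs"
proof -
  obtain G: "graph V E" and cy: "is_cycle E cs" using H unfolding disk_drawing_def by blast
  show ?thesis
  proof (cases rule: disk_cases[OF G cy, case_names chord two one bare])
    case (chord e)
    obtain u v where e: "e = {u, v}" "u \<noteq> v" using graph_edge[OF G chord(1)] by blast
    have uv: "u \<in> set cs" "v \<in> set cs" using chord(3) e(1) by auto
    have ks: "distinct ([] :: 'a list)" "set [] \<inter> set cs = {}" "set [] \<subseteq> V" by simp_all
    have "path_edges (u # [] @ [v]) = {e}" using e(1) by simp
    then have ear: "path_edges (u # [] @ [v]) \<subseteq> E" "path_edges (u # [] @ [v]) \<inter> cycle_edges cs = {}"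
      using chord(1,2) by auto
    show ?thesis by (rule disk_bound_ear_between[OF g3 H IHD uv e(2) ks ear])
  next
    case (two w u v)
    show ?thesis by (rule disk_bound_two_attachments[OF g3 H IHD two])
  next
    case (one w)
    show ?thesis by (rule disk_bound_one_attachment[OF H IHD IHG one])
  next
    case bare
    then show ?thesis by (rule disk_bound_bare_cycle[OF g3 H])
  qed
qed

section \<open>The edge bound for plane graphs of given girth\<close>

text \<open>The part of a drawing on and outside a cycle, redrawn by inversion at a point inside the
  cycle, becomes a disk drawing bounded by the same cycle.\<close>
lemma outer_disk:
  assumes G: "graph V E" and D: "drawn V E p \<gamma>" and gi: "girth_at_least g E" and cy: "is_cycle E cs"
  defines "J \<equiv> edges_image \<gamma> (cycle_edges cs)"
  defines "Vo \<equiv> set cs \<union> {w \<in> V. p w \<in> outside J}"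
    and "Eo \<equiv> {e \<in> E. path_image (\<gamma> e) \<subseteq> J \<union> outside J}"
  shows "\<exists>p' \<gamma>'. disk_drawing g Vo Eo p' \<gamma>' cs"
proof -
  have JJ: "inside J \<noteq> {}" "closed J" "bounded J" "inside J \<inter> outside J = {}" "inside J \<union> outside J = - J"
    using cycle_jordan[OF G D cy] unfolding J_def by blast+
  have ceE: "cycle_edges cs \<subseteq> E" and m3: "3 \<le> length cs" using cy unfolding is_cycle_def by blast+
  have csV: "set cs \<subseteq> V" by (rule is_cycle_set_sub[OF G cy])
  have pcs: "p ` set cs \<subseteq> J"
    using edges_image_vert[OF G D ceE] cycle_edges_Union[OF m3] unfolding J_def by blast
  obtain z0 where z0: "z0 \<in> inside J" using JJ(1) by blast
  define f where "f = inversion z0"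
  have VoV: "Vo \<subseteq> V" and EoE: "Eo \<subseteq> E" unfolding Vo_def Eo_def using csV by blast+
  have evo: "e \<subseteq> Vo" if e: "e \<in> Eo" for e
    using region_edge_ends[OF G D cy, of e "outside J"] e unfolding Eo_def Vo_def J_def by blast
  have Go: "graph Vo Eo" by (rule graph_sub[OF G VoV EoE]) (use evo in blast)
  have vo: "p w \<in> J \<union> outside J" if "w \<in> Vo" for w
    using that pcs unfolding Vo_def by blast
  have z0n: "z0 \<notin> J \<union> outside J" using z0 JJ(4) inside_no_overlap[of J] by blast
  have Do: "drawn Vo Eo (f \<circ> p) (\<lambda>e. f \<circ> \<gamma> e)"
    unfolding f_def
    by (rule drawn_inversion[OF drawn_sub[OF D VoV EoE] Go]) (use evo vo z0n in \<open>auto simp: Eo_def\<close>)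
  have cyo: "is_cycle Eo cs" using cy ceE unfolding is_cycle_def Eo_def J_def edges_image_def by blast
  have J': "edges_image (\<lambda>e. f \<circ> \<gamma> e) (cycle_edges cs) = f ` J"
    unfolding f_def J_def by (rule edges_image_inversion)
  have inv: "f ` outside J \<subseteq> inside (f ` J)"
    unfolding f_def using inversion_outside_inside[OF JJ(2,3) z0] .
  have "\<forall>v\<in>Vo. (f \<circ> p) v \<in> f ` J \<union> inside (f ` J)" using vo inv by auto
  moreover have "\<forall>e\<in>Eo. path_image (f \<circ> \<gamma> e) \<subseteq> f ` J \<union> inside (f ` J)"
    unfolding Eo_def path_image_compose using inv by blast
  ultimately have "disk_drawing g Vo Eo (f \<circ> p) (\<lambda>e. f \<circ> \<gamma> e) cs"
    unfolding disk_drawing_def J' using Go Do girth_at_least_mono[OF gi EoE] cyo by blast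
  then show ?thesis by blast
qed

lemma cycle_sides_cover:
  assumes G: "graph V E" and D: "drawn V E p \<gamma>" and cy: "is_cycle E cs"
  defines "J \<equiv> edges_image \<gamma> (cycle_edges cs)"
  defines "Vi \<equiv> set cs \<union> {w \<in> V. p w \<in> inside J}"
    and "Ei \<equiv> {e \<in> E. path_image (\<gamma> e) \<subseteq> J \<union> inside J}"
    and "Vo \<equiv> set cs \<union> {w \<in> V. p w \<in> outside J}"
    and "Eo \<equiv> {e \<in> E. path_image (\<gamma> e) \<subseteq> J \<union> outside J}"
  shows "V \<subseteq> Vi \<union> Vo" "Vi \<inter> Vo \<subseteq> set cs" "E \<subseteq> Ei \<union> Eo" "cycle_edges cs \<subseteq> Ei \<inter> Eo"
proof -
  have JJ: "open (inside J)" "open (outside J)" "closed J"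
    "inside J \<inter> outside J = {}" "inside J \<union> outside J = - J"
    using cycle_jordan[OF G D cy] unfolding J_def by blast+
  have ceE: "cycle_edges cs \<subseteq> E" using cy unfolding is_cycle_def by blast
  show "V \<subseteq> Vi \<union> Vo"
  proof
    fix w assume w: "w \<in> V"
    have "w \<in> set cs" if "p w \<in> J" using vertex_on_cycle[OF G D cy w] that unfolding J_def by blast
    then show "w \<in> Vi \<union> Vo" using w JJ(5) unfolding Vi_def Vo_def by blast
  qed
  show "Vi \<inter> Vo \<subseteq> set cs" using JJ(4) unfolding Vi_def Vo_def by blast
  show "cycle_edges cs \<subseteq> Ei \<inter> Eo" using ceE unfolding Ei_def Eo_def J_def edges_image_def by blast
  show "E \<subseteq> Ei \<union> Eo"
  proof
    fix e assume eE: "e \<in> E"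
    show "e \<in> Ei \<union> Eo"
    proof (cases "e \<in> cycle_edges cs")
      case True
      then show ?thesis using eE unfolding Ei_def J_def edges_image_def by blast
    next
      case False
      have "edge_interior \<gamma> p e \<inter> J = {}" unfolding J_def by (rule edge_interior_avoids_image[OF G D eE ceE False])
      then have "edge_interior \<gamma> p e \<subseteq> inside J \<union> outside J" using JJ(5) by blast
      then have "path_image (\<gamma> e) \<subseteq> closure (inside J) \<or> path_image (\<gamma> e) \<subseteq> closure (outside J)"
        by (rule edge_in_one_region[OF G D eE JJ(1,2,4)])
      then show ?thesis
        using closure_inside_subset[OF JJ(3)] closure_outside_subset[OF JJ(3)] eE
        unfolding Ei_def Eo_def by blast
    qed
  qed
qed

text \<open>If the drawing contains a cycle, the bound follows from the disk bounds for the two sides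
  of the cycle.\<close>
lemma girth_bound_at_cycle:
  fixes V :: "'a set"
  assumes g3: "3 \<le> g" and G: "graph V E" and D: "drawn V E p \<gamma>" and gi: "girth_at_least g E"
    and cy: "is_cycle E cs"
    and DISK: "\<And>V' E' (p'::'a \<Rightarrow> complex) \<gamma>' cs'. card V' + card E' \<le> card V + card E \<Longrightarrow>
               disk_drawing g V' E' p' \<gamma>' cs' \<Longrightarrow> disk_bound g V' E' cs'"
  shows "girth_bound g V E"
proof -
  define J where "J = edges_image \<gamma> (cycle_edges cs)"
  define Vi where "Vi = set cs \<union> {w \<in> V. p w \<in> inside J}"
  define Ei where "Ei = {e \<in> E. path_image (\<gamma> e) \<subseteq> J \<union> inside J}"
  define Vo where "Vo = set cs \<union> {w \<in> V. p w \<in> outside J}"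
  define Eo where "Eo = {e \<in> E. path_image (\<gamma> e) \<subseteq> J \<union> outside J}"
  note cover = cycle_sides_cover[OF G D cy, folded J_def, folded Vi_def Ei_def Vo_def Eo_def]
  have dcs: "distinct cs" and m3: "3 \<le> length cs" using cy unfolding is_cycle_def by auto
  have csV: "set cs \<subseteq> V" by (rule is_cycle_set_sub[OF G cy])
  have finV: "finite V" and finE: "finite E" using graph_finite_vertices[OF G] graph_finite_edges[OF G] .
  have sub: "Vi \<subseteq> V" "Vo \<subseteq> V" "Ei \<subseteq> E" "Eo \<subseteq> E" using csV unfolding Vi_def Vo_def Ei_def Eo_def by blast+
  have small: "card Vi + card Ei \<le> card V + card E" "card Vo + card Eo \<le> card V + card E"
    using card_mono[OF finV] card_mono[OF finE] sub by (meson add_le_mono)+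
  have "disk_drawing g Vi Ei p \<gamma> cs"
    using disk_of_cycle[OF G D gi cy csV] unfolding Vi_def Ei_def J_def .
  then have bi: "disk_bound g Vi Ei cs" by (rule DISK[OF small(1)])
  obtain p' \<gamma>' where "disk_drawing g Vo Eo p' \<gamma>' cs"
    using outer_disk[OF G D gi cy] unfolding Vo_def Eo_def J_def by blast
  then have bo: "disk_bound g Vo Eo cs" by (rule DISK[OF small(2)])
  have fin: "finite Ei" "finite Eo" using finE sub finite_subset by blast+
  have "card Vi + card Vo \<le> card V + card (set cs)"
    by (rule card_pieces_le[OF finV sub(1,2) cover(2)]) simp
  moreover have "card E + card (cycle_edges cs) \<le> card Ei + card Eo"
    by (rule card_pieces_ge[OF fin cover(3,4)])
  moreover have "card (set cs) = length cs" "card (cycle_edges cs) = length cs"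
    using distinct_card[OF dcs] cycle_edges_card[OF dcs m3] by simp_all
  moreover have "g * length cs + 0 \<le> (g - 2) * length cs + length cs + length cs + g"
    using mult_minus_two[of g "length cs"] g3 by simp
  ultimately have "(g - 2) * card E + g + 0 \<le> g * card V"
    using glue_bound[OF bi[unfolded disk_bound_def] bo[unfolded disk_bound_def],
        of "card V" "length cs" "card E" "length cs" 0] by simp
  then show ?thesis unfolding girth_bound_def by simp
qed

lemma girth_bound_delete_vertex:
  fixes V :: "'a set"
  assumes H: "girth_drawing g V E p \<gamma>"
    and IHG: "\<And>V' E' (p'::'a \<Rightarrow> complex) \<gamma>'. card V' + card E' < card V + card E \<Longrightarrow>
               girth_drawing g V' E' p' \<gamma>' \<Longrightarrow> girth_bound g V' E'"
    and x: "x \<in> V" and small: "(g - 2) * card {e \<in> E. x \<in> e} \<le> g"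
  shows "girth_bound g V E"
proof (cases "V = {x}")
  case True
  have G: "graph V E" using H unfolding girth_drawing_def by blast
  have "E = {}" using graph_edge[OF G] True by blast
  then show ?thesis unfolding girth_bound_def using True by simp
next
  case False
  have G: "graph V E" and D: "drawn V E p \<gamma>" and gi: "girth_at_least g E"
    using H unfolding girth_drawing_def by blast+
  have finV: "finite V" and finE: "finite E" using graph_finite_vertices[OF G] graph_finite_edges[OF G] .
  define V' where "V' = V - {x}"
  define E' where "E' = {e \<in> E. x \<notin> e}"
  have V'V: "V' \<subseteq> V" and E'E: "E' \<subseteq> E" and ev: "\<forall>e\<in>E'. e \<subseteq> V'"
    using graph_edge_sub[OF G] unfolding V'_def E'_def by blast+
  have "girth_drawing g V' E' p \<gamma>"
    unfolding girth_drawing_def using graph_sub[OF G V'V E'E ev] drawn_sub[OF D V'V E'E ev]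
      girth_at_least_mono[OF gi E'E] False x unfolding V'_def by blast
  moreover have cV: "card V = Suc (card V')"
  proof -
    have "card V > 0" using finV x card_gt_0_iff by blast
    then show ?thesis unfolding V'_def using x by (simp add: card_Diff_singleton)
  qed
  moreover have cE: "card E = card E' + card {e \<in> E. x \<in> e}"
  proof -
    have "E = E' \<union> {e \<in> E. x \<in> e}" "E' \<inter> {e \<in> E. x \<in> e} = {}" unfolding E'_def by blast+
    then show ?thesis using finE by (metis (no_types, lifting) card_Un_disjoint finite_Un)
  qed
  ultimately have "girth_bound g V' E'" by (intro IHG) simp_all
  then show ?thesis
    using cV cE small unfolding girth_bound_def by (simp add: distrib_left)
qed

text \<open>One step of the induction for general drawings: delete a vertex of small degree, or else
  every vertex has two neighbours, so there is a cycle to split along.\<close>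
lemma girth_bound_step:
  fixes V :: "'a set"
  assumes g3: "3 \<le> g" and H: "girth_drawing g V E p \<gamma>"
    and IHG: "\<And>V' E' (p'::'a \<Rightarrow> complex) \<gamma>'. card V' + card E' < card V + card E \<Longrightarrow>
               girth_drawing g V' E' p' \<gamma>' \<Longrightarrow> girth_bound g V' E'"
    and DISK: "\<And>V' E' (p'::'a \<Rightarrow> complex) \<gamma>' cs'. card V' + card E' \<le> card V + card E \<Longrightarrow>
               disk_drawing g V' E' p' \<gamma>' cs' \<Longrightarrow> disk_bound g V' E' cs'"
  shows "girth_bound g V E"
proof (cases "\<exists>x\<in>V. (g - 2) * card {e \<in> E. x \<in> e} \<le> g")
  case True
  then obtain x where x: "x \<in> V" "(g - 2) * card {e \<in> E. x \<in> e} \<le> g" by blast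
  show ?thesis by (rule girth_bound_delete_vertex[OF H IHG x])
next
  case False
  have G: "graph V E" and D: "drawn V E p \<gamma>" and gi: "girth_at_least g E" and Vne: "V \<noteq> {}"
    using H unfolding girth_drawing_def by blast+
  have "\<exists>y z. y \<noteq> z \<and> {x, y} \<in> E \<and> {x, z} \<in> E" if x: "x \<in> V" for x
  proof -
    have "2 \<le> card {e \<in> E. x \<in> e}"
    proof (rule ccontr)
      assume "\<not> 2 \<le> card {e \<in> E. x \<in> e}"
      then have "(g - 2) * card {e \<in> E. x \<in> e} \<le> (g - 2) * 1" by (intro mult_le_mono2) simp
      then have "(g - 2) * card {e \<in> E. x \<in> e} \<le> g" by linarith
      then show False using False x by blast
    qed
    then obtain e1 e2 where e: "e1 \<in> E" "x \<in> e1" "e2 \<in> E" "x \<in> e2" "e1 \<noteq> e2"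
      using two_elements[of "{e \<in> E. x \<in> e}"] graph_finite_edges[OF G] by auto
    obtain y where y: "e1 = {x, y}" using edge_other[OF G e(1,2)] by blast
    obtain z where z: "e2 = {x, z}" using edge_other[OF G e(3,4)] by blast
    show ?thesis using e y z by blast
  qed
  then obtain cs where cy: "is_cycle E cs" using min_degree_two_cycle[OF G Vne] by blast
  show ?thesis by (rule girth_bound_at_cycle[OF g3 G D gi cy DISK])
qed

lemma bounds_by_size:
  assumes g3: "3 \<le> g"
  shows "(\<forall>(V::'a set) E (p::'a \<Rightarrow> complex) \<gamma> cs. card V + card E = N \<longrightarrow>
            disk_drawing g V E p \<gamma> cs \<longrightarrow> disk_bound g V E cs) \<and>
         (\<forall>(V::'a set) E (p::'a \<Rightarrow> complex) \<gamma>. card V + card E = N \<longrightarrow>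
            girth_drawing g V E p \<gamma> \<longrightarrow> girth_bound g V E)"
proof (induction N rule: less_induct)
  case (less N)
  have IHD: "disk_bound g V E cs" if "card V + card E < N" "disk_drawing g V E p \<gamma> cs"
    for V :: "'a set" and E p \<gamma> cs using less that by blast
  have IHG: "girth_bound g V E" if "card V + card E < N" "girth_drawing g V E p \<gamma>"
    for V :: "'a set" and E p \<gamma> using less that by blast
  have disk: "disk_bound g V E cs" if "card V + card E = N" "disk_drawing g V E p \<gamma> cs"
    for V :: "'a set" and E p \<gamma> cs
    by (rule disk_bound_step[OF g3 that(2)]) (use IHD IHG that(1) in auto)
  have "girth_bound g V E" if "card V + card E = N" "girth_drawing g V E p \<gamma>"
    for V :: "'a set" and E p \<gamma>
  proof (rule girth_bound_step[OF g3 that(2)])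
    show "girth_bound g V' E'" if "card V' + card E' < card V + card E" "girth_drawing g V' E' p' \<gamma>'"
      for V' E' and p' :: "'a \<Rightarrow> complex" and \<gamma>'
      using IHG that \<open>card V + card E = N\<close> by simp
    show "disk_bound g V' E' cs'" if "card V' + card E' \<le> card V + card E" "disk_drawing g V' E' p' \<gamma>' cs'"
      for V' E' and p' :: "'a \<Rightarrow> complex" and \<gamma>' cs'
      using IHD disk that \<open>card V + card E = N\<close> by (cases "card V' + card E' < N") auto
  qed
  then show ?case using disk by blast
qed

theorem girth_edge_bound:
  fixes V :: "'a set" and p :: "'a \<Rightarrow> complex"
  assumes "3 \<le> g" "girth_drawing g V E p \<gamma>"
  shows "girth_bound g V E"
  using bounds_by_size[OF assms(1), of "card V + card E"] assms(2) by blast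

section \<open>Low-degree vertices and defensive alliances\<close>

lemma delta_eq_card_incident:
  assumes G: "graph V E" and v: "v \<in> S"
  shows "delta E S v = card {e \<in> {e \<in> E. e \<subseteq> S}. v \<in> e}"
proof -
  have "bij_betw (\<lambda>u. {u,v}) {u \<in> S. adj E u v} {e \<in> {e \<in> E. e \<subseteq> S}. v \<in> e}"
  proof (rule bij_betwI')
    fix x y assume x: "x \<in> {u \<in> S. adj E u v}" and y: "y \<in> {u \<in> S. adj E u v}"
    have "{x,v} \<in> E" using x unfolding adj_def by blast
    then obtain a b where "{x,v} = {a,b}" "a \<noteq> b" using graph_edge[OF G] by blast
    then have xv: "x \<noteq> v" by (auto simp: doubleton_eq_iff)
    show "({x, v} = {y, v}) = (x = y)"
    proof
      assume "{x, v} = {y, v}"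
      then show "x = y" using xv by (auto simp: doubleton_eq_iff)
    qed simp
  next
    fix x assume x: "x \<in> {u \<in> S. adj E u v}"
    then show "{x, v} \<in> {e \<in> {e \<in> E. e \<subseteq> S}. v \<in> e}" using v unfolding adj_def by auto
  next
    fix e assume e: "e \<in> {e \<in> {e \<in> E. e \<subseteq> S}. v \<in> e}"
    then have eE: "e \<in> E" and eS: "e \<subseteq> S" and ve: "v \<in> e" by auto
    obtain y where y: "e = {v,y}" "y \<noteq> v" using edge_other[OF G eE ve] by blast
    have "y \<in> S" using eS y by blast
    moreover have "adj E y v" using eE y unfolding adj_def by (simp add: insert_commute)
    moreover have "e = {y, v}" using y by (simp add: insert_commute)
    ultimately show "\<exists>x\<in>{u \<in> S. adj E u v}. e = {x, v}" by blast
  qed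
  then show ?thesis unfolding delta_def by (rule bij_betw_same_card)
qed

lemma handshake:
  assumes G: "graph V E" and S: "S \<subseteq> V"
  shows "(\<Sum>v\<in>S. delta E S v) = 2 * card {e \<in> E. e \<subseteq> S}"
proof -
  define ES where "ES = {e \<in> E. e \<subseteq> S}"
  have finS: "finite S" using graph_finite_vertices[OF G] S finite_subset by blast
  have finES: "finite ES" using graph_finite_edges[OF G] unfolding ES_def by simp
  have "(\<Sum>v\<in>S. delta E S v) = (\<Sum>v\<in>S. card {e \<in> ES. v \<in> e})"
    using delta_eq_card_incident[OF G] unfolding ES_def by simp
  also have "\<dots> = (\<Sum>v\<in>S. \<Sum>e\<in>ES. if v \<in> e then 1 else 0)"
  proof (rule sum.cong[OF refl])
    fix v assume "v \<in> S"
    have "card {e \<in> ES. v \<in> e} = (\<Sum>e\<in>{e \<in> ES. v \<in> e}. 1)" by simp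
    also have "\<dots> = (\<Sum>e\<in>ES. if v \<in> e then 1 else 0)" by (rule sum.inter_filter[OF finES])
    finally show "card {e \<in> ES. v \<in> e} = (\<Sum>e\<in>ES. if v \<in> e then 1 else 0)" .
  qed
  also have "\<dots> = (\<Sum>e\<in>ES. \<Sum>v\<in>S. if v \<in> e then 1 else 0)" by (rule sum.swap)
  also have "\<dots> = (\<Sum>e\<in>ES. (2::nat))"
  proof (rule sum.cong[OF refl])
    fix e assume e: "e \<in> ES"
    then have eE: "e \<in> E" and eS: "e \<subseteq> S" unfolding ES_def by auto
    obtain a b where ab: "e = {a,b}" "a \<noteq> b" using graph_edge[OF G eE] by blast
    have "(\<Sum>v\<in>S. if v \<in> e then 1 else 0) = (\<Sum>v\<in>{v \<in> S. v \<in> e}. (1::nat))"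
      by (rule sum.inter_filter[OF finS, symmetric])
    also have "{v \<in> S. v \<in> e} = e" using eS by blast
    finally show "(\<Sum>v\<in>S. if v \<in> e then 1 else 0) = (2::nat)" using ab by simp
  qed
  also have "\<dots> = 2 * card ES" by simp
  finally show ?thesis unfolding ES_def .
qed

lemma planar_low_degree_vertex:
  fixes V :: "'a set"
  assumes G: "graph V E" and P: "planar V E" and g3: "3 \<le> g" and gi: "girth_at_least g E"
    and gd: "2 * g \<le> (g - 2) * d" and S: "S \<subseteq> V" "S \<noteq> {}"
  shows "\<exists>v\<in>S. delta E S v < d"
proof (rule ccontr)
  assume "\<not> (\<exists>v\<in>S. delta E S v < d)"
  then have dd: "\<forall>v\<in>S. d \<le> delta E S v" by auto
  obtain p :: "'a \<Rightarrow> complex" and \<gamma> where D: "drawn V E p \<gamma>" using P planar_drawn by blast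
  define ES where "ES = {e \<in> E. e \<subseteq> S}"
  have ESE: "ES \<subseteq> E" and es: "\<forall>e\<in>ES. e \<subseteq> S" unfolding ES_def by auto
  have "girth_drawing g S ES p \<gamma>"
    unfolding girth_drawing_def
    using graph_sub[OF G S(1) ESE es] drawn_sub[OF D S(1) ESE es] girth_at_least_mono[OF gi ESE] S(2) by blast
  then have gb: "(g - 2) * card ES + g \<le> g * card S"
    using girth_edge_bound[OF g3] unfolding girth_bound_def by blast
  have "card S * d \<le> (\<Sum>v\<in>S. delta E S v)" using sum_bounded_below[of S d "delta E S"] dd by simp
  then have h1: "d * card S \<le> 2 * card ES" using handshake[OF G S(1)] unfolding ES_def by (simp add: mult.commute)
  have h2: "(g - 2) * (d * card S) \<le> (g - 2) * (2 * card ES)" using mult_le_mono2[OF h1] .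
  have h3: "2 * g * card S \<le> (g - 2) * d * card S" using mult_le_mono1[OF gd] .
  have e1: "(g - 2) * (d * card S) = (g - 2) * d * card S" by (simp add: mult.assoc)
  have e2: "(g - 2) * (2 * card ES) = 2 * ((g - 2) * card ES)" by (simp add: mult.left_commute)
  have e3: "2 * g * card S = 2 * (g * card S)" by (simp add: mult.assoc)
  show False using gb h2 h3 e1 e2 e3 g3 by linarith
qed

lemma triangle_free_girth_4:
  assumes G: "graph V E" and T: "triangle_free V E"
  shows "girth_at_least 4 E"
  unfolding girth_at_least_def
proof (intro allI impI)
  fix cs assume c: "is_cycle E cs"
  show "4 \<le> length cs"
  proof (rule ccontr)
    assume "\<not> 4 \<le> length cs"
    then have "length cs = 3" using c unfolding is_cycle_def by simp
    then obtain a b x where cs: "cs = [a, b, x]"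
      by (cases cs; cases "tl cs"; cases "tl (tl cs)") auto
    have "{a, b} \<in> E" "{b, x} \<in> E" "{x, a} \<in> E" using c unfolding is_cycle_def cs cycle_edges_def by auto
    then have "adj E a b" "adj E b x" "adj E a x" unfolding adj_def by (auto simp: insert_commute)
    then show False using T is_cycle_set_sub[OF G c] unfolding triangle_free_def cs by auto
  qed
qed

lemma is_cycle_has_cycle:
  assumes c: "is_cycle E cs" and V: "set cs \<subseteq> V"
  shows "has_cycle V E"
proof -
  have d: "distinct cs" and l3: "3 \<le> length cs" and ce: "cycle_edges cs \<subseteq> E"
    using c unfolding is_cycle_def by auto
  have "walk V E cs"
    unfolding walk_def
  proof (intro conjI allI impI)
    show "cs \<noteq> []" using l3 by auto
    show "set cs \<subseteq> V" by (rule V)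
    fix i assume "Suc i < length cs"
    then have "{cs ! i, cs ! Suc i} \<in> path_edges cs" by (rule path_edges_nth)
    then show "adj E (cs ! i) (cs ! Suc i)" using ce unfolding adj_def cycle_edges_def by blast
  qed
  moreover have "adj E (last cs) (hd cs)" using ce unfolding adj_def cycle_edges_def by blast
  ultimately show "has_cycle V E" unfolding has_cycle_def using d l3 by blast
qed

lemma acyclic_low_degree_vertex:
  assumes G: "graph V E" and nc: "\<not> has_cycle V E" and S: "S \<subseteq> V" "S \<noteq> {}"
  shows "\<exists>v\<in>S. delta E S v < 2"
proof (rule ccontr)
  assume "\<not> (\<exists>v\<in>S. delta E S v < 2)"
  then have dd: "\<forall>v\<in>S. 2 \<le> delta E S v" by auto
  define ES where "ES = {e \<in> E. e \<subseteq> S}"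
  have ESE: "ES \<subseteq> E" and es: "\<forall>e\<in>ES. e \<subseteq> S" unfolding ES_def by auto
  have GS: "graph S ES" by (rule graph_sub[OF G S(1) ESE es])
  have "\<exists>y z. y \<noteq> z \<and> {x, y} \<in> ES \<and> {x, z} \<in> ES" if x: "x \<in> S" for x
  proof -
    have "2 \<le> card {u \<in> S. adj E u x}" using dd x unfolding delta_def by blast
    then obtain y z where yz: "y \<in> {u \<in> S. adj E u x}" "z \<in> {u \<in> S. adj E u x}" "y \<noteq> z"
      using two_elements[of "{u \<in> S. adj E u x}"] graph_finite_vertices[OF GS] by auto
    then have "{y, x} \<in> E" "{z, x} \<in> E" "y \<in> S" "z \<in> S" unfolding adj_def by auto
    then have "{x, y} \<in> ES" "{x, z} \<in> ES" using x unfolding ES_def by (auto simp: insert_commute)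
    then show ?thesis using yz(3) by blast
  qed
  then obtain cs where c: "is_cycle ES cs" using min_degree_two_cycle[OF GS S(2)] by blast
  have "is_cycle E cs" using c ESE unfolding is_cycle_def by blast
  then have "has_cycle V E" using is_cycle_has_cycle is_cycle_set_sub[OF GS c] S(1) by blast
  then show False using nc by blast
qed

lemma phi_d_full:
  assumes G: "graph V E" and low: "\<And>S. S \<subseteq> V \<Longrightarrow> S \<noteq> {} \<Longrightarrow> \<exists>v\<in>S. delta E S v < d"
    and dk: "int d \<le> k"
  shows "phi_d V E k = card V"
proof -
  have no_alliance: "\<not> defensive_alliance V E k S" if S: "S \<subseteq> V" for S
  proof
    assume "defensive_alliance V E k S"
    then have ne: "S \<noteq> {}" and al: "\<forall>v\<in>S. int (delta E (V - S) v) + k \<le> int (delta E S v)"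
      unfolding defensive_alliance_def by auto
    obtain v where v: "v \<in> S" "delta E S v < d" using low[OF S ne] by blast
    have "int (delta E (V - S) v) + k \<le> int (delta E S v)" using al v(1) by blast
    then show False using v(2) dk by linarith
  qed
  have daf: "daf_set V E k V" unfolding daf_set_def using no_alliance by blast
  define T where "T = {card X | X. daf_set V E k X}"
  have le: "t \<le> card V" if t: "t \<in> T" for t
  proof -
    obtain X where "t = card X" "daf_set V E k X" using t unfolding T_def by blast
    then show ?thesis using card_mono[OF graph_finite_vertices[OF G]] unfolding daf_set_def by blast
  qed
  have "Max T = card V"
  proof (rule Max_eqI)
    show "finite T" using le by (meson finite_nat_set_iff_bounded_le)
    show "card V \<in> T" using daf unfolding T_def by blast
  qed (rule le)
  then show ?thesis unfolding phi_d_def T_def .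
qed

text \<open>The main theorem: in all three cases every nonempty vertex set has a vertex with fewer
  than k neighbours inside it (fewer than 2, 6, resp. 4); the conditions on the maximum degree
  only make the range of k nonempty.\<close>
theorem proposition1:
  fixes V :: "'a set" and E :: "'a set set" and k :: int
  assumes "graph V E"
  shows "(is_tree V E \<and> max_degree V E \<ge> 2 \<and> 2 \<le> k \<and> k \<le> int (max_degree V E)
            \<longrightarrow> phi_d V E k = card V)
       \<and> (planar V E \<and> max_degree V E \<ge> 6 \<and> 6 \<le> k \<and> k \<le> int (max_degree V E)
            \<longrightarrow> phi_d V E k = card V)
       \<and> (planar V E \<and> triangle_free V E \<and> max_degree V E \<ge> 4 \<and> 4 \<le> k \<and> k \<le> int (max_degree V E)
            \<longrightarrow> phi_d V E k = card V)"
proof (intro conjI impI)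
  assume a: "is_tree V E \<and> max_degree V E \<ge> 2 \<and> 2 \<le> k \<and> k \<le> int (max_degree V E)"
  then have "\<not> has_cycle V E" unfolding is_tree_def by blast
  then show "phi_d V E k = card V"
    using phi_d_full[OF assms acyclic_low_degree_vertex[OF assms]] a by simp
next
  assume a: "planar V E \<and> max_degree V E \<ge> 6 \<and> 6 \<le> k \<and> k \<le> int (max_degree V E)"
  have "girth_at_least 3 E" unfolding girth_at_least_def is_cycle_def by blast
  then show "phi_d V E k = card V"
    using phi_d_full[OF assms planar_low_degree_vertex[OF assms _ _ _ _, of 3 6]] a by simp
next
  assume a: "planar V E \<and> triangle_free V E \<and> max_degree V E \<ge> 4 \<and> 4 \<le> k \<and> k \<le> int (max_degree V E)"
  then have "girth_at_least 4 E" using triangle_free_girth_4[OF assms] by blast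
  then show "phi_d V E k = card V"
    using phi_d_full[OF assms planar_low_degree_vertex[OF assms _ _ _ _, of 4 4]] a by simp
qed

end
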